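(* Let $H$ be a Hilbert space, let $a_1,\dots,a_\ell,b_1,\dots,b_\ell\in\mathcal{B}(H)$, and let $T\colon\mathcal{B}(H)\to\mathcal{B}(H)$ be the elementary operator $Tx=\sum_{j=1}^\ell a_jxb_j$. Then \[ \|T\|=\sup_{p_1,p_2}\left\|\sum_{j=1}^\ell (p_1a_j)\otimes(b_jp_2)\right\|_h, \] where the supremum is over all rank one orthogonal projections $p_1,p_2\in\mathcal{B}(H)$ (i.e. $p_i^2=p_i=p_i^*$ of rank one).
   Context: $\|T\|$ is the operator norm of $T$ on $\mathcal{B}(H)$ with the operator norm. $\|\cdot\|_h$ is the Haagerup tensor norm on $\mathcal{B}(H)\otimes\mathcal{B}(H)$: for $u\in\mathcal{B}(H)\otimes\mathcal{B}(H)$, $\|u\|_h=\inf\left\{\left\|\sum_{j=1}^n c_jc_j^*\right\|^{1/2}\left\|\sum_{j=1}^n d_j^*d_j\right\|^{1/2}\right\}$, the infimum over all representations $u=\sum_{j=1}^n c_j\otimes d_j$. *)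

theory Defs
  imports "HOL-Analysis.Analysis"
begin

text \<open>The distribution has no complex Hilbert spaces, so we introduce them as a type class.
  The inner product is conjugate-linear in the first and linear in the second argument.\<close>

class complex_inner = real_normed_vector +
  fixes scaleC :: "complex \<Rightarrow> 'a \<Rightarrow> 'a"
    and cinner :: "'a \<Rightarrow> 'a \<Rightarrow> complex"
  assumes scaleC_add_right: "scaleC c (x + y) = scaleC c x + scaleC c y"
    and scaleC_add_left: "scaleC (b + c) x = scaleC b x + scaleC c x"
    and scaleC_scaleC: "scaleC b (scaleC c x) = scaleC (b * c) x"
    and scaleC_one: "scaleC 1 x = x"
    and scaleR_scaleC: "scaleR r x = scaleC (complex_of_real r) x"
    and cinner_add_right: "cinner x (y + z) = cinner x y + cinner x z"
    and cinner_scaleC_right: "cinner x (scaleC c y) = c * cinner x y"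
    and cinner_commute: "cinner y x = cnj (cinner x y)"
    and cinner_eq_zero_iff: "cinner x x = 0 \<longleftrightarrow> x = 0"
    and cinner_ge_zero: "0 \<le> Re (cinner x x)"
    and norm_eq_sqrt_cinner: "norm x = sqrt (Re (cinner x x))"

class chilbert_space = complex_inner + complete_space

definition bounded_clinear :: "('a::complex_inner \<Rightarrow> 'a) \<Rightarrow> bool" where
  "bounded_clinear f \<longleftrightarrow>
     (\<forall>x y. f (x + y) = f x + f y) \<and>
     (\<forall>c x. f (scaleC c x) = scaleC c (f x)) \<and>
     (\<exists>K. \<forall>x. norm (f x) \<le> norm x * K)"

definition cadj :: "('a::complex_inner \<Rightarrow> 'a) \<Rightarrow> ('a \<Rightarrow> 'a)" where
  "cadj a = (THE b. \<forall>x y. cinner (a x) y = cinner x (b y))"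

definition rank_one_projection :: "('a::complex_inner \<Rightarrow> 'a) \<Rightarrow> bool" where
  "rank_one_projection p \<longleftrightarrow>
     bounded_clinear p \<and> p \<circ> p = p \<and> cadj p = p \<and>
     (\<exists>v. v \<noteq> 0 \<and> range p = {scaleC c v | c. True})"

definition elem_op :: "nat \<Rightarrow> (nat \<Rightarrow> 'a::complex_inner \<Rightarrow> 'a) \<Rightarrow> (nat \<Rightarrow> 'a \<Rightarrow> 'a)
    \<Rightarrow> ('a \<Rightarrow> 'a) \<Rightarrow> ('a \<Rightarrow> 'a)" where
  "elem_op l a b x = (\<lambda>h. \<Sum>j\<in>{1..l}. a j (x (b j h)))"

definition elem_op_norm :: "nat \<Rightarrow> (nat \<Rightarrow> 'a::complex_inner \<Rightarrow> 'a) \<Rightarrow> (nat \<Rightarrow> 'a \<Rightarrow> 'a) \<Rightarrow> real" where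
  "elem_op_norm l a b =
     Sup {onorm (elem_op l a b x) | x. bounded_clinear x \<and> onorm x \<le> 1}"

text \<open>An element of the algebraic tensor product is given by a representation
  sum_j c_j \<otimes> d_j, i.e. a list of pairs (c_j, d_j). Two representations define the same
  tensor iff they agree on all products of linear functionals on B(H)
  (the standard realisation of V \<otimes> W inside bilinear forms on V' \<times> W').\<close>

definition clinear_functional :: "(('a::complex_inner \<Rightarrow> 'a) \<Rightarrow> complex) \<Rightarrow> bool" where
  "clinear_functional \<phi> \<longleftrightarrow>
     (\<forall>x y. bounded_clinear x \<longrightarrow> bounded_clinear y \<longrightarrow> \<phi> (\<lambda>h. x h + y h) = \<phi> x + \<phi> y) \<and>
     (\<forall>c x. bounded_clinear x \<longrightarrow> \<phi> (\<lambda>h. scaleC c (x h)) = c * \<phi> x)"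

definition same_tensor :: "(('a::complex_inner \<Rightarrow> 'a) \<times> ('a \<Rightarrow> 'a)) list
    \<Rightarrow> (('a \<Rightarrow> 'a) \<times> ('a \<Rightarrow> 'a)) list \<Rightarrow> bool" where
  "same_tensor r u \<longleftrightarrow>
     (\<forall>\<phi> \<psi>. clinear_functional \<phi> \<longrightarrow> clinear_functional \<psi> \<longrightarrow>
        sum_list (map (\<lambda>(c, d). \<phi> c * \<psi> d) r) = sum_list (map (\<lambda>(c, d). \<phi> c * \<psi> d) u))"

definition haagerup_norm :: "(('a::complex_inner \<Rightarrow> 'a) \<times> ('a \<Rightarrow> 'a)) list \<Rightarrow> real" where
  "haagerup_norm u =
     Inf {sqrt (onorm (\<lambda>h. sum_list (map (\<lambda>(c, d). c (cadj c h)) r))) *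
          sqrt (onorm (\<lambda>h. sum_list (map (\<lambda>(c, d). cadj d (d h)) r)))
        | r. (\<forall>(c, d) \<in> set r. bounded_clinear c \<and> bounded_clinear d) \<and> same_tensor r u}"

end

theory Submission
  imports Defs
begin

text \<open>Fix unit vectors \<open>\<xi>\<close>, \<open>\<eta>\<close> and put \<open>\<alpha>\<^sub>j = a\<^sub>j\<^sup>* \<xi>\<close>, \<open>\<beta>\<^sub>j = b\<^sub>j \<eta>\<close>. For the rank one
  projections \<open>p\<^sub>1 = \<xi>\<xi>\<^sup>*\<close>, \<open>p\<^sub>2 = \<eta>\<eta>\<^sup>*\<close> the tensor \<open>\<Sum> p\<^sub>1 a\<^sub>j \<otimes> b\<^sub>j p\<^sub>2\<close> is
  \<open>\<Sum> \<xi>\<alpha>\<^sub>j\<^sup>* \<otimes> \<beta>\<^sub>j\<eta>\<^sup>*\<close>, and \<open>\<langle>\<xi>, T(x) \<eta>\<rangle> = \<Sum> \<langle>\<alpha>\<^sub>j, x \<beta>\<^sub>j\<rangle>\<close>. As \<open>\<parallel>T\<parallel>\<close> is the supremum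
  of \<open>|\<langle>\<xi>, T(x) \<eta>\<rangle>|\<close> over unit vectors and contractions \<open>x\<close>, two estimates for fixed
  \<open>\<xi>, \<eta>\<close> suffice. For any representation \<open>\<Sum> c\<^sub>i \<otimes> d\<^sub>i\<close> of the tensor,
  \<open>\<langle>\<xi>, T(x) \<eta>\<rangle> = \<Sum> \<langle>c\<^sub>i\<^sup>* \<xi>, x d\<^sub>i \<eta>\<rangle>\<close>, which Cauchy-Schwarz bounds by
  \<open>\<parallel>\<Sum> c\<^sub>i c\<^sub>i\<^sup>*\<parallel>\<^sup>1\<^sup>/\<^sup>2 \<parallel>\<Sum> d\<^sub>i\<^sup>* d\<^sub>i\<parallel>\<^sup>1\<^sup>/\<^sup>2\<close>. Conversely, a singular value decomposition
  \<open>\<Sum> \<alpha>\<^sub>j\<^sup>* \<otimes> \<beta>\<^sub>j = \<Sum> \<sigma>\<^sub>i u\<^sub>i\<^sup>* \<otimes> v\<^sub>i\<close>, obtained by repeatedly maximising the form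
  \<open>(w, z) \<mapsto> \<Sum> \<langle>\<alpha>\<^sub>j, w\<rangle> \<langle>z, \<beta>\<^sub>j\<rangle>\<close> over unit balls of finite-dimensional spans, yields a
  representation of Haagerup cost \<open>\<Sum> \<sigma>\<^sub>i\<close>, while the contraction \<open>x = \<Sum> u\<^sub>i v\<^sub>i\<^sup>*\<close> attains
  \<open>\<Sum> \<langle>\<alpha>\<^sub>j, x \<beta>\<^sub>j\<rangle> = \<Sum> \<sigma>\<^sub>i\<close>.
  Adjoints exist by the Riesz representation theorem, proved by maximising the functional over
  the unit ball, which is possible by completeness and the parallelogram law.\<close>

lemma cnj_cinner: "cnj (cinner x y) = cinner y x"
  by (simp add: cinner_commute[of y x])

lemma cinner_add_left: "cinner (x + y) z = cinner x z + cinner y z"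
  by (metis cinner_add_right cnj_cinner complex_cnj_add)

lemma cinner_scaleC_left: "cinner (scaleC c x) y = cnj c * cinner x y"
  by (metis cinner_scaleC_right cnj_cinner complex_cnj_mult)

lemma cinner_zero_right [simp]: "cinner x 0 = 0"
  using cinner_add_right[of x 0 0] by simp

lemma cinner_zero_left [simp]: "cinner 0 x = 0"
  using cinner_add_left[of 0 0 x] by simp

lemma scaleC_minus1: "scaleC (-1) x = - x"
  using scaleR_scaleC[of "-1" x] by simp

lemma cinner_minus_right: "cinner x (- y) = - cinner x y"
  using cinner_scaleC_right[of x "-1" y] by (simp add: scaleC_minus1)

lemma cinner_minus_left: "cinner (- x) y = - cinner x y"
  by (metis cinner_minus_right cnj_cinner complex_cnj_minus)

lemma cinner_diff_right: "cinner x (y - z) = cinner x y - cinner x z"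
  by (simp only: diff_conv_add_uminus cinner_add_right cinner_minus_right)

lemma cinner_diff_left: "cinner (x - y) z = cinner x z - cinner y z"
  by (simp only: diff_conv_add_uminus cinner_add_left cinner_minus_left)

lemma scaleC_zero_left [simp]: "scaleC 0 x = 0"
  using scaleR_scaleC[of 0 x] by simp

lemma scaleC_zero_right [simp]: "scaleC c 0 = 0"
  using scaleC_add_right[of c 0 0] by simp

lemma scaleC_minus_right: "scaleC c (- x) = - scaleC c x"
  by (metis mult.commute scaleC_minus1 scaleC_scaleC)

lemma scaleC_diff_right: "scaleC c (x - y) = scaleC c x - scaleC c y"
  by (simp only: diff_conv_add_uminus scaleC_add_right scaleC_minus_right)

lemma cinner_self_eq_norm_power2: "cinner x x = complex_of_real ((norm x)\<^sup>2)"
proof -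
  have "Im (cinner x x) = 0"
    using cinner_commute[of x x] by (metis Im_complex_of_real Reals_cnj_iff complex_is_Real_iff)
  then show ?thesis
    by (simp add: complex_eq_iff norm_eq_sqrt_cinner cinner_ge_zero)
qed

lemma power2_norm_eq_cinner: "(norm x)\<^sup>2 = Re (cinner x x)"
  by (simp add: cinner_self_eq_norm_power2)

lemma norm_scaleC: "norm (scaleC c x) = cmod c * norm x"
proof -
  have ccn: "c * cnj c = (complex_of_real (cmod c))\<^sup>2"
    using complex_norm_square[of c] by simp
  have e: "cnj c * (c * w) = complex_of_real ((cmod c)\<^sup>2) * w" for w
    by (simp only: complex_norm_square) (simp add: mult_ac)
  have "cinner (scaleC c x) (scaleC c x) = complex_of_real ((cmod c * norm x)\<^sup>2)"
    by (simp only: cinner_scaleC_left cinner_scaleC_right e cinner_self_eq_norm_power2[of x])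
      (simp add: power_mult_distrib ccn)
  then have "(norm (scaleC c x))\<^sup>2 = (cmod c * norm x)\<^sup>2"
    by (simp add: power2_norm_eq_cinner)
  then show ?thesis by (simp add: power2_eq_iff_nonneg)
qed

lemma norm_scaleC_inverse_norm:
  "x \<noteq> 0 \<Longrightarrow> norm (scaleC (complex_of_real (1 / norm x)) x) = 1"
  by (simp add: norm_scaleC norm_divide)

lemma cinner_scaleC_inverse_norm:
  "cinner (scaleC (complex_of_real (1 / norm y)) y) y = complex_of_real (norm y)"
  by (simp add: cinner_scaleC_left cinner_self_eq_norm_power2 power2_eq_square)

lemma power2_norm_add: "(norm (x + y))\<^sup>2 = (norm x)\<^sup>2 + (norm y)\<^sup>2 + 2 * Re (cinner x y)"
  using cnj_cinner[of y x]
  by (simp add: power2_norm_eq_cinner cinner_add_left cinner_add_right) (metis complex_cnj_cancel_iff cnj.sel(1))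

lemma power2_norm_diff: "(norm (x - y))\<^sup>2 = (norm x)\<^sup>2 + (norm y)\<^sup>2 - 2 * Re (cinner x y)"
  using cnj_cinner[of y x]
  by (simp add: power2_norm_eq_cinner cinner_diff_left cinner_diff_right) (metis cnj.sel(1))

lemma power2_norm_add_orthogonal:
  "cinner x y = 0 \<Longrightarrow> (norm (x + y))\<^sup>2 = (norm x)\<^sup>2 + (norm y)\<^sup>2"
  by (simp add: power2_norm_add)

lemma norm_cinner_le: "cmod (cinner x y) \<le> norm x * norm y"
proof (cases "x = 0")
  case False
  then have nx: "norm x > 0" by simp
  define t where "t = cinner x y / complex_of_real ((norm x)\<^sup>2)"
  have "cinner y (scaleC t x) = t * cnj (cinner x y)"
    by (simp add: cinner_scaleC_right cnj_cinner)
  moreover have "Re (t * cnj (cinner x y)) = (cmod (cinner x y))\<^sup>2 / (norm x)\<^sup>2"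
    unfolding t_def
    by (simp add: complex_norm_square[symmetric] Re_divide_of_real mult.commute del: of_real_power)
  moreover have "(cmod t)\<^sup>2 * (norm x)\<^sup>2 = (cmod (cinner x y))\<^sup>2 / (norm x)\<^sup>2"
  proof -
    have "cmod t = cmod (cinner x y) / (norm x)\<^sup>2"
      unfolding t_def by (simp add: norm_divide del: of_real_power)
    then show ?thesis using nx by (simp add: field_simps power2_eq_square)
  qed
  moreover have "0 \<le> (norm (y - scaleC t x))\<^sup>2" by simp
  ultimately have "(cmod (cinner x y))\<^sup>2 / (norm x)\<^sup>2 \<le> (norm y)\<^sup>2"
    by (simp add: power2_norm_diff norm_scaleC power_mult_distrib)
  then have "(cmod (cinner x y))\<^sup>2 \<le> (norm x * norm y)\<^sup>2"
    using nx by (simp add: divide_le_eq power_mult_distrib mult.commute)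
  then show ?thesis by (simp add: power2_le_iff_abs_le)
qed simp

lemma Re_cinner_le: "Re (cinner x y) \<le> norm x * norm y"
  using norm_cinner_le[of x y] complex_Re_le_cmod order_trans by blast

lemma cinner_ext_right: "(\<And>z. cinner z x = cinner z y) \<Longrightarrow> x = y"
  by (metis cinner_diff_right cinner_eq_zero_iff eq_iff_diff_eq_0)

lemma cinner_ext_left: "(\<And>z. cinner x z = cinner y z) \<Longrightarrow> x = y"
  by (metis cinner_diff_left cinner_eq_zero_iff eq_iff_diff_eq_0)

lemma cinner_sum_list_right: "cinner x (sum_list (map g L)) = sum_list (map (\<lambda>p. cinner x (g p)) L)"
  by (induction L) (simp_all add: cinner_add_right)

lemma cinner_sum_list_left: "cinner (sum_list (map g L)) x = sum_list (map (\<lambda>p. cinner (g p) x) L)"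
  by (induction L) (simp_all add: cinner_add_left)

lemma sum_list_scaleC_left: "sum_list (map (\<lambda>q. scaleC (f q) v) L) = scaleC (sum_list (map f L)) v"
  by (induction L) (simp_all add: scaleC_add_left)

lemma of_real_sum_list:
  "of_real (sum_list (map f L)) = sum_list (map (\<lambda>q. of_real (f q)) L)"
  by (induction L) simp_all

lemma bounded_bilinear_cinner: "bounded_bilinear (cinner :: 'a::complex_inner \<Rightarrow> 'a \<Rightarrow> complex)"
proof
  fix a a' b b' :: 'a and r :: real
  show "cinner (a + a') b = cinner a b + cinner a' b" by (rule cinner_add_left)
  show "cinner a (b + b') = cinner a b + cinner a b'" by (rule cinner_add_right)
  show "cinner (scaleR r a) b = scaleR r (cinner a b)"
    by (simp add: scaleR_scaleC cinner_scaleC_left scaleR_conv_of_real)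
  show "cinner a (scaleR r b) = scaleR r (cinner a b)"
    by (simp add: scaleR_scaleC cinner_scaleC_right scaleR_conv_of_real)
  show "\<exists>K. \<forall>a b::'a. norm (cinner a b) \<le> norm a * norm b * K"
    by (rule exI[of _ 1]) (simp add: norm_cinner_le)
qed

lemma bounded_bilinear_scaleC: "bounded_bilinear (scaleC :: complex \<Rightarrow> 'a::complex_inner \<Rightarrow> 'a)"
proof
  fix a a' :: complex and b b' :: 'a and r :: real
  show "scaleC (a + a') b = scaleC a b + scaleC a' b" by (rule scaleC_add_left)
  show "scaleC a (b + b') = scaleC a b + scaleC a b'" by (rule scaleC_add_right)
  show "scaleC (scaleR r a) b = scaleR r (scaleC a b)"
    by (simp add: scaleR_scaleC scaleC_scaleC scaleR_conv_of_real)
  show "scaleC a (scaleR r b) = scaleR r (scaleC a b)"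
    by (simp add: scaleR_scaleC scaleC_scaleC mult.commute)
  show "\<exists>K. \<forall>(a::complex) (b::'a). norm (scaleC a b) \<le> norm a * norm b * K"
    by (rule exI[of _ 1]) (simp add: norm_scaleC)
qed

lemmas continuous_on_cinner [continuous_intros] =
  bounded_bilinear.continuous_on[OF bounded_bilinear_cinner]
lemmas continuous_on_scaleC [continuous_intros] =
  bounded_bilinear.continuous_on[OF bounded_bilinear_scaleC]

lemma complex_phase_exists: "\<exists>u::complex. cmod u = 1 \<and> u * w = complex_of_real (cmod w)"
proof (cases "w = 0")
  case False
  define u where "u = cnj w / complex_of_real (cmod w)"
  have "cmod u = 1" using False unfolding u_def by (simp add: norm_divide)
  moreover have "u * w = complex_of_real (cmod w)"
    using False unfolding u_def
    by (simp add: field_simps complex_norm_square[symmetric] power2_eq_square)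
  ultimately show ?thesis by blast
qed (intro exI[of _ 1], simp)

lemma bounded_clinear_add: "bounded_clinear f \<Longrightarrow> f (x + y) = f x + f y"
  and bounded_clinear_scaleC: "bounded_clinear f \<Longrightarrow> f (scaleC c x) = scaleC c (f x)"
  unfolding bounded_clinear_def by blast+

lemma bounded_clinear_bound:
  assumes "bounded_clinear f"
  obtains K where "K \<ge> 0" "\<And>x. norm (f x) \<le> norm x * K"
proof -
  obtain K where K: "\<And>x. norm (f x) \<le> norm x * K"
    using assms unfolding bounded_clinear_def by blast
  have "norm (f x) \<le> norm x * max K 0" for x
    using K[of x] by (smt (verit, best) mult_left_mono norm_ge_zero)
  then show ?thesis by (intro that[of "max K 0"]) auto
qed

lemma bounded_clinear_zero: "bounded_clinear f \<Longrightarrow> f 0 = 0"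
  using bounded_clinear_add[of f 0 0] by simp

lemma bounded_clinear_imp_bounded_linear:
  assumes f: "bounded_clinear f"
  shows "bounded_linear f"
proof -
  obtain K where "\<And>x. norm (f x) \<le> norm x * K" using bounded_clinear_bound[OF f] by blast
  then show ?thesis
    by (rule bounded_linear_intro[rotated 2])
      (simp_all add: bounded_clinear_add[OF f] scaleR_scaleC bounded_clinear_scaleC[OF f])
qed

lemma bounded_clinear_norm_le_onorm: "bounded_clinear f \<Longrightarrow> norm (f x) \<le> onorm f * norm x"
  by (rule onorm[OF bounded_clinear_imp_bounded_linear])

lemma bounded_clinear_sum_list:
  "bounded_clinear f \<Longrightarrow> f (sum_list (map g L)) = sum_list (map (\<lambda>p. f (g p)) L)"
  by (induction L) (simp_all add: bounded_clinear_zero bounded_clinear_add)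

lemma norm_sum_list_le: "norm (sum_list (map f r)) \<le> sum_list (map (\<lambda>q. norm (f q)) r)"
  by (induction r) (simp_all add: order_trans[OF norm_triangle_ineq])

lemma bounded_clinear_intro:
  assumes "\<And>x y. f (x + y) = f x + f y" "\<And>c x. f (scaleC c x) = scaleC c (f x)"
    and "\<And>x. norm (f x) \<le> norm x * K"
  shows "bounded_clinear f"
  unfolding bounded_clinear_def using assms by blast

lemma bounded_clinear_zero_fun: "bounded_clinear (\<lambda>h. 0)"
  by (rule bounded_clinear_intro[where K = 0]) simp_all

lemma bounded_clinear_compose:
  assumes f: "bounded_clinear f" and g: "bounded_clinear g"
  shows "bounded_clinear (f \<circ> g)"
proof -
  obtain K1 where K1: "K1 \<ge> 0" "\<And>x. norm (f x) \<le> norm x * K1"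
    using bounded_clinear_bound[OF f] by blast
  obtain K2 where K2: "\<And>x. norm (g x) \<le> norm x * K2"
    using bounded_clinear_bound[OF g] by blast
  have "norm (f (g x)) \<le> norm x * (K2 * K1)" for x
    using K1(2)[of "g x"] mult_right_mono[OF K2[of x] K1(1)] by (simp add: mult.assoc)
  then show ?thesis
    by (intro bounded_clinear_intro) (simp_all add: f g bounded_clinear_add bounded_clinear_scaleC)
qed

lemma bounded_clinear_sum_list_fun:
  "(\<And>q. q \<in> set r \<Longrightarrow> bounded_clinear (F q)) \<Longrightarrow>
    bounded_clinear (\<lambda>h. sum_list (map (\<lambda>q. F q h) r))"
proof (induction r)
  case Nil
  then show ?case by (simp add: bounded_clinear_zero_fun)
next
  case (Cons q r)
  then have f: "bounded_clinear (F q)" and g: "bounded_clinear (\<lambda>h. sum_list (map (\<lambda>q. F q h) r))"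
    by auto
  obtain K1 where K1: "\<And>x. norm (F q x) \<le> norm x * K1" using bounded_clinear_bound[OF f] by blast
  obtain K2 where K2: "\<And>x. norm (sum_list (map (\<lambda>q. F q x) r)) \<le> norm x * K2"
    using bounded_clinear_bound[OF g] by blast
  have "norm (F q x + sum_list (map (\<lambda>q. F q x) r)) \<le> norm x * (K1 + K2)" for x
    using order_trans[OF norm_triangle_ineq add_mono[OF K1 K2]] by (simp add: distrib_left)
  then show ?case
    by (intro bounded_clinear_intro)
      (simp_all add: bounded_clinear_add[OF f] bounded_clinear_add[OF g] bounded_clinear_scaleC[OF f]
        bounded_clinear_scaleC[OF g] scaleC_add_right)
qed

section \<open>The Riesz representation theorem and adjoints\<close>

lemma power2_norm_diff_le_of_norm_add:
  fixes x y :: "'a::complex_inner"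
  assumes "norm x \<le> 1" "norm y \<le> 1" "2 - d \<le> norm (x + y)" "0 \<le> d"
  shows "(norm (x - y))\<^sup>2 \<le> 4 * d"
proof -
  have "(norm (x - y))\<^sup>2 + (norm (x + y))\<^sup>2 = 2 * (norm x)\<^sup>2 + 2 * (norm y)\<^sup>2"
    by (simp add: power2_norm_add power2_norm_diff)
  moreover have "(norm x)\<^sup>2 \<le> 1" "(norm y)\<^sup>2 \<le> 1"
    using assms by (simp_all add: power_le_one)
  moreover have "(2 - d)\<^sup>2 \<le> (norm (x + y))\<^sup>2" if "d \<le> 2"
    using assms that by (intro power_mono) auto
  moreover have "(2 - d)\<^sup>2 = 4 - 4 * d + d\<^sup>2"
    by (simp add: power2_eq_square algebra_simps)
  moreover have "0 \<le> d\<^sup>2" "0 \<le> (norm (x + y))\<^sup>2" by simp_all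
  ultimately show ?thesis
    by (cases "d \<le> 2") linarith+
qed

lemma Cauchy_if_almost_maximizing:
  fixes g :: "'a::complex_inner \<Rightarrow> complex"
  assumes add: "\<And>x y. g (x + y) = g x + g y"
    and bound: "\<And>x. cmod (g x) \<le> M * norm x" and M: "M > 0"
    and X: "\<And>n. norm (X n) \<le> 1" "\<And>n. M - inverse (real (Suc n)) < Re (g (X n))"
  shows "Cauchy X"
proof (rule CauchyI)
  fix e :: real
  assume e: "e > 0"
  obtain N :: nat where N: "8 / (M * e\<^sup>2) < real N" using reals_Archimedean2 by blast
  define d where "d = 2 / (M * real (Suc N))"
  have Me: "M * e\<^sup>2 > 0" using M e by simp
  then have "8 < real N * (M * e\<^sup>2)" using N by (simp add: divide_less_eq)
  then have "8 < real (Suc N) * (M * e\<^sup>2)" using Me by (simp add: distrib_right)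
  moreover have "4 * d = 8 / (M * real (Suc N))" unfolding d_def by simp
  ultimately have d: "d > 0" "4 * d < e\<^sup>2"
    using M by (simp_all add: d_def pos_divide_less_eq mult_ac)
  have "norm (X m - X n) < e" if "m \<ge> N" "n \<ge> N" for m n
  proof -
    have "inverse (real (Suc m)) \<le> inverse (real (Suc N))" "inverse (real (Suc n)) \<le> inverse (real (Suc N))"
      using that by (simp_all add: field_simps)
    moreover have "M * (2 - d) = 2 * M - 2 * inverse (real (Suc N))"
      using M by (simp add: d_def right_diff_distrib inverse_eq_divide)
    moreover have "Re (g (X m + X n)) = Re (g (X m)) + Re (g (X n))" by (simp add: add)
    ultimately have "M * (2 - d) < Re (g (X m + X n))"
      using X(2)[of m] X(2)[of n] by linarith
    also have "\<dots> \<le> M * norm (X m + X n)"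
      using bound complex_Re_le_cmod order_trans by blast
    finally have "2 - d \<le> norm (X m + X n)" using M by simp
    then have "(norm (X m - X n))\<^sup>2 < e\<^sup>2"
      using power2_norm_diff_le_of_norm_add[OF X(1) X(1)] d by fastforce
    then show ?thesis using e by (simp add: power_less_imp_less_base)
  qed
  then show "\<exists>N. \<forall>m\<ge>N. \<forall>n\<ge>N. norm (X m - X n) < e" by blast
qed

lemma almost_maximizing_sequence:
  fixes g :: "'a::complex_inner \<Rightarrow> complex"
  assumes add: "\<And>x y. g (x + y) = g x + g y"
    and sc: "\<And>c x. g (scaleC c x) = c * g x"
    and bd: "\<And>x. cmod (g x) \<le> K * norm x"
    and nonzero: "g x1 \<noteq> 0"
  obtains M X where "M > 0" "\<And>x. cmod (g x) \<le> M * norm x"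
    "\<And>n. norm (X n) \<le> 1" "\<And>n. M - inverse (real (Suc n)) < Re (g (X n))"
proof -
  have g0: "g 0 = 0" using add[of 0 0] by simp
  define S where "S = {Re (g x) | x. norm x \<le> 1}"
  have "x1 \<noteq> 0" using nonzero g0 by auto
  then have "0 < K * norm x1"
    using bd[of x1] nonzero by (meson less_le_trans zero_less_norm_iff)
  then have "K \<ge> 0"
    using \<open>x1 \<noteq> 0\<close> by (simp add: zero_less_mult_iff)
  have "s \<le> K" if "s \<in> S" for s
  proof -
    obtain x where "s = Re (g x)" "norm x \<le> 1" using \<open>s \<in> S\<close> unfolding S_def by blast
    then show ?thesis
      using complex_Re_le_cmod[of "g x"] bd[of x] mult_left_le[OF _ \<open>K \<ge> 0\<close>] by fastforce
  qed
  then have "bdd_above S" by (rule bdd_aboveI)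
  define M where "M = Sup S"
  have Sne: "S \<noteq> {}" unfolding S_def by (auto intro: exI[of _ 0])
  have inS: "Re (g x) \<le> M" if "norm x \<le> 1" for x
    unfolding M_def by (rule cSup_upper[OF _ \<open>bdd_above S\<close>]) (use that in \<open>auto simp: S_def\<close>)
  have gle: "cmod (g x) \<le> M * norm x" for x
  proof (cases "x = 0")
    case False
    obtain u where u: "cmod u = 1" "u * g x = complex_of_real (cmod (g x))"
      using complex_phase_exists by blast
    define y where "y = scaleC (u / complex_of_real (norm x)) x"
    have "norm y = 1" using False u unfolding y_def by (simp add: norm_scaleC norm_divide)
    moreover have "g y = complex_of_real (cmod (g x) / norm x)"
      unfolding y_def sc using u(2) by (simp add: field_simps)
    ultimately have "cmod (g x) / norm x \<le> M" using inS[of y] by simp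
    then show ?thesis using False by (simp add: divide_le_eq mult.commute)
  qed (simp add: g0)
  have "0 < M * norm x1"
    using gle[of x1] nonzero by (meson less_le_trans zero_less_norm_iff)
  then have Mpos: "M > 0"
    using \<open>x1 \<noteq> 0\<close> by (simp add: zero_less_mult_iff)
  have "\<forall>n. \<exists>x. norm x \<le> 1 \<and> M - inverse (real (Suc n)) < Re (g x)"
  proof
    fix n
    have "M - inverse (real (Suc n)) < M" by simp
    then obtain s where "s \<in> S" "M - inverse (real (Suc n)) < s"
      unfolding M_def using Sne by (rule less_cSupE)
    then show "\<exists>x. norm x \<le> 1 \<and> M - inverse (real (Suc n)) < Re (g x)" unfolding S_def by blast
  qed
  then obtain X where X: "\<And>n. norm (X n) \<le> 1" "\<And>n. M - inverse (real (Suc n)) < Re (g (X n))"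
    by (metis choice_iff)
  then show ?thesis using that Mpos gle by blast
qed

lemma riesz_norming_vector:
  fixes g :: "'a::chilbert_space \<Rightarrow> complex"
  assumes add: "\<And>x y. g (x + y) = g x + g y"
    and sc: "\<And>c x. g (scaleC c x) = c * g x"
    and bd: "\<And>x. cmod (g x) \<le> K * norm x"
    and nonzero: "g x1 \<noteq> 0"
  obtains z M where "M > 0" "norm z = 1" "g z = complex_of_real M"
    "\<And>x. cmod (g x) \<le> M * norm x"
proof -
  obtain M X where Mpos: "M > 0" and gle: "\<And>x. cmod (g x) \<le> M * norm x"
    and X: "\<And>n. norm (X n) \<le> 1" "\<And>n. M - inverse (real (Suc n)) < Re (g (X n))"
    using almost_maximizing_sequence[OF add sc bd nonzero] by blast
  have bl: "bounded_linear g"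
    by (rule bounded_linear_intro[of _ K])
      (auto simp: add sc scaleR_scaleC scaleR_conv_of_real mult.commute bd)
  obtain z where z: "X \<longlonglongrightarrow> z"
    using Cauchy_if_almost_maximizing[OF add gle Mpos X] Cauchy_convergent convergent_def by blast
  have nz: "norm z \<le> 1"
    by (rule LIMSEQ_le_const2[OF tendsto_norm[OF z]]) (use X(1) in auto)
  have "(\<lambda>n. M - inverse (real (Suc n))) \<longlonglongrightarrow> M"
    using tendsto_diff[OF tendsto_const LIMSEQ_inverse_real_of_nat, of M] by simp
  moreover have "(\<lambda>n. Re (g (X n))) \<longlonglongrightarrow> Re (g z)"
    by (intro tendsto_Re bounded_linear.tendsto[OF bl] z)
  ultimately have "M \<le> Re (g z)"
    by (rule LIMSEQ_le) (use X(2) in \<open>auto intro: less_imp_le\<close>)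
  moreover have "Re (g z) \<le> cmod (g z)" by (rule complex_Re_le_cmod)
  moreover have "cmod (g z) \<le> M * norm z" by (rule gle)
  moreover have "M * norm z \<le> M" using nz Mpos by (simp add: mult_left_le)
  ultimately have "M \<le> M * norm z" and ReM: "Re (g z) = M" and cm: "cmod (g z) = M"
    by linarith+
  then have "norm z = 1" using nz Mpos by (simp add: mult_le_cancel_left1)
  moreover have "g z = complex_of_real M"
    using ReM cm cmod_power2[of "g z"] by (simp add: complex_eq_iff)
  ultimately show ?thesis using that Mpos gle by blast
qed

text \<open>A norming vector is orthogonal to the kernel: otherwise moving it along a kernel
  direction would shorten it without changing the value of the functional.\<close>

lemma norming_vector_orthogonal_kernel:
  assumes add: "\<And>x y. g (x + y) = g x + g y"
    and sc: "\<And>c x. g (scaleC c x) = c * g x"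
    and M: "M > 0" and nz: "norm z = 1" and gz: "g z = complex_of_real M"
    and gle: "\<And>x. cmod (g x) \<le> M * norm x"
    and gh: "g h = 0"
  shows "cinner z h = 0"
proof -
  define w where "w = cinner z h"
  define s where "s = 1 / ((norm h)\<^sup>2 + 1)"
  have spos: "s > 0" unfolding s_def by (simp add: add_nonneg_pos)
  have sh: "s * (norm h)\<^sup>2 < 2"
    unfolding s_def by (simp add: add_nonneg_pos pos_divide_less_eq)
  define t where "t = - complex_of_real s * cnj w"
  have "g (z + scaleC t h) = complex_of_real M" by (simp add: add sc gh gz)
  then have "M \<le> M * norm (z + scaleC t h)" using gle[of "z + scaleC t h"] by simp
  then have "1 \<le> (norm (z + scaleC t h))\<^sup>2" using M by (simp add: one_le_power)
  also have "(norm (z + scaleC t h))\<^sup>2 = 1 + (cmod t)\<^sup>2 * (norm h)\<^sup>2 + 2 * Re (t * w)"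
    unfolding power2_norm_add norm_scaleC nz w_def
    by (simp add: cinner_scaleC_right power_mult_distrib)
  also have "(cmod t)\<^sup>2 = s\<^sup>2 * (cmod w)\<^sup>2"
    unfolding t_def using spos by (simp add: norm_mult power_mult_distrib)
  also have "t * w = - complex_of_real (s * (cmod w)\<^sup>2)"
    unfolding t_def using complex_norm_square[of w]
    by (metis mult.assoc mult.commute mult_minus_left of_real_mult)
  finally have "0 \<le> s * (cmod w)\<^sup>2 * (s * (norm h)\<^sup>2 - 2)"
    by (simp add: algebra_simps power2_eq_square)
  then have "s * (cmod w)\<^sup>2 \<le> 0"
    using sh mult_pos_neg[of "s * (cmod w)\<^sup>2" "s * (norm h)\<^sup>2 - 2"] by linarith
  then show ?thesis unfolding w_def using spos by (simp add: mult_le_0_iff)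
qed

theorem riesz_representation:
  fixes g :: "'a::chilbert_space \<Rightarrow> complex"
  assumes add: "\<And>x y. g (x + y) = g x + g y"
    and sc: "\<And>c x. g (scaleC c x) = c * g x"
    and bd: "\<And>x. cmod (g x) \<le> K * norm x"
  shows "\<exists>z. \<forall>x. g x = cinner z x"
proof (cases "\<forall>x. g x = 0")
  case False
  then obtain x1 where "g x1 \<noteq> 0" by blast
  then obtain z M where M: "M > 0" "norm z = 1" "g z = complex_of_real M"
    "\<And>x. cmod (g x) \<le> M * norm x"
    using riesz_norming_vector[OF add sc bd] by blast
  have "g h = cinner (scaleC (complex_of_real M) z) h" for h
  proof -
    define h' where "h' = h - scaleC (g h / complex_of_real M) z"
    have "g h = g h' + g h / complex_of_real M * g z"
      using add[of h' "scaleC (g h / complex_of_real M) z"] by (simp add: h'_def sc)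
    then have "g h' = 0" using M(1,3) by simp
    then have "cinner z h' = 0" by (rule norming_vector_orthogonal_kernel[OF add sc M])
    then have "cinner z h = g h / complex_of_real M"
      using M(2) by (simp add: h'_def cinner_diff_right cinner_scaleC_right cinner_self_eq_norm_power2)
    then show ?thesis using M(1) by (simp add: cinner_scaleC_left)
  qed
  then show ?thesis by blast
qed (auto intro: exI[of _ 0])

lemma adjoint_exists:
  fixes a :: "'a::chilbert_space \<Rightarrow> 'a"
  assumes "bounded_clinear a"
  shows "\<exists>b. \<forall>x y. cinner (a x) y = cinner x (b y)"
proof -
  obtain K where K: "K \<ge> 0" "\<And>x. norm (a x) \<le> norm x * K"
    using bounded_clinear_bound[OF assms] by blast
  have "\<exists>z. \<forall>x. cinner y (a x) = cinner z x" for y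
  proof (rule riesz_representation[where K = "norm y * K"])
    show "cmod (cinner y (a x)) \<le> norm y * K * norm x" for x
      using norm_cinner_le[of y "a x"] mult_left_mono[OF K(2)[of x] norm_ge_zero[of y]]
      by (simp add: mult_ac)
  qed (simp_all add: bounded_clinear_add[OF assms] bounded_clinear_scaleC[OF assms]
      cinner_add_right cinner_scaleC_right)
  then obtain b where "\<And>y x. cinner y (a x) = cinner (b y) x" by metis
  then show ?thesis by (metis cnj_cinner)
qed

lemma cadj_eqI: "(\<And>x y. cinner (a x) y = cinner x (b y)) \<Longrightarrow> cadj a = b"
  unfolding cadj_def
proof (rule the_equality)
  fix b' assume b': "\<forall>x y. cinner (a x) y = cinner x (b' y)" and b: "\<And>x y. cinner (a x) y = cinner x (b y)"
  show "b' = b"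
    by (rule ext, rule cinner_ext_left) (metis b b' cnj_cinner)
qed blast

lemma cinner_cadj_right:
  fixes a :: "'a::chilbert_space \<Rightarrow> 'a"
  assumes "bounded_clinear a"
  shows "cinner (a x) y = cinner x (cadj a y)"
  using adjoint_exists[OF assms] cadj_eqI by metis

lemma cinner_cadj_left:
  fixes a :: "'a::chilbert_space \<Rightarrow> 'a"
  assumes "bounded_clinear a"
  shows "cinner (cadj a y) x = cinner y (a x)"
  by (metis assms cinner_cadj_right cnj_cinner)

lemma bounded_clinear_cadj:
  fixes a :: "'a::chilbert_space \<Rightarrow> 'a"
  assumes a: "bounded_clinear a"
  shows "bounded_clinear (cadj a)"
proof -
  obtain K where K: "K \<ge> 0" "\<And>x. norm (a x) \<le> norm x * K"
    using bounded_clinear_bound[OF a] by blast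
  have "norm (cadj a y) \<le> norm y * K" for y
  proof -
    have "(norm (cadj a y))\<^sup>2 = Re (cinner (a (cadj a y)) y)"
      by (simp add: power2_norm_eq_cinner cinner_cadj_right[OF a])
    also have "\<dots> \<le> norm (a (cadj a y)) * norm y" by (rule Re_cinner_le)
    also have "\<dots> \<le> norm (cadj a y) * K * norm y" by (rule mult_right_mono[OF K(2) norm_ge_zero])
    finally have "(norm (cadj a y))\<^sup>2 \<le> norm (cadj a y) * (norm y * K)" by (simp add: mult_ac)
    then show ?thesis
      by (cases "norm (cadj a y) = 0") (auto simp: power2_eq_square K(1))
  qed
  moreover have "cadj a (y + y') = cadj a y + cadj a y'" for y y'
    by (rule cinner_ext_right) (simp add: cinner_cadj_right[OF a, symmetric] cinner_add_right)
  moreover have "cadj a (scaleC c y) = scaleC c (cadj a y)" for c y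
    by (rule cinner_ext_right) (simp add: cinner_cadj_right[OF a, symmetric] cinner_scaleC_right)
  ultimately show ?thesis by (blast intro: bounded_clinear_intro)
qed

fun orthonormal_list :: "'a::complex_inner list \<Rightarrow> bool" where
  "orthonormal_list [] = True"
| "orthonormal_list (e # E) \<longleftrightarrow>
    norm e = 1 \<and> (\<forall>f\<in>set E. cinner e f = 0) \<and> orthonormal_list E"

definition orth_proj :: "'a::complex_inner list \<Rightarrow> 'a \<Rightarrow> 'a" where
  "orth_proj E y = sum_list (map (\<lambda>e. scaleC (cinner e y) e) E)"

lemma orth_proj_Nil [simp]: "orth_proj [] y = 0"
  and orth_proj_Cons: "orth_proj (e # E) y = scaleC (cinner e y) e + orth_proj E y"
  by (simp_all add: orth_proj_def)

lemma orth_proj_add: "orth_proj E (x + y) = orth_proj E x + orth_proj E y"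
  by (induction E) (simp_all add: orth_proj_Cons cinner_add_right scaleC_add_left algebra_simps)

lemma orth_proj_scaleC: "orth_proj E (scaleC c x) = scaleC c (orth_proj E x)"
  by (induction E) (simp_all add: orth_proj_Cons cinner_scaleC_right scaleC_add_right scaleC_scaleC)

lemma orth_proj_zero [simp]: "orth_proj E 0 = 0"
  using orth_proj_add[of E 0 0] by simp

lemma orth_proj_minus: "orth_proj E (- x) = - orth_proj E x"
  using orth_proj_scaleC[of E "-1" x] by (simp add: scaleC_minus1)

lemma orth_proj_diff: "orth_proj E (x - y) = orth_proj E x - orth_proj E y"
  by (metis add_diff_cancel_right' diff_add_cancel orth_proj_add)

lemma cinner_orth_proj_left: "cinner (orth_proj E z) y = cinner z (orth_proj E y)"
  by (induction E)
    (simp_all add: orth_proj_Cons cinner_add_left cinner_add_right cinner_scaleC_left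
      cinner_scaleC_right cnj_cinner mult.commute)

lemma orth_proj_sum_list_fixed:
  "(\<forall>p\<in>set L. orth_proj E (h p) = h p) \<Longrightarrow>
    orth_proj E (sum_list (map (\<lambda>p. scaleC (f p) (h p)) L)) = sum_list (map (\<lambda>p. scaleC (f p) (h p)) L)"
  by (induction L) (simp_all add: orth_proj_add orth_proj_scaleC)

lemma orthonormal_list_norm: "orthonormal_list E \<Longrightarrow> e \<in> set E \<Longrightarrow> norm e = 1"
  by (induction E) auto

lemma orth_proj_member:
  assumes "orthonormal_list E" "e \<in> set E"
  shows "orth_proj E e = e"
  using assms
proof (induction E)
  case (Cons f E)
  show ?case
  proof (cases "e = f")
    case True
    with Cons.prems(1) have "\<forall>g\<in>set E. cinner g f = 0" by (metis cnj_cinner complex_cnj_zero orthonormal_list.simps(2))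
    then have "orth_proj E f = 0" by (induction E) (simp_all add: orth_proj_Cons)
    with True Cons.prems(1) show ?thesis by (simp add: orth_proj_Cons cinner_self_eq_norm_power2 scaleC_one)
  next
    case False
    with Cons show ?thesis by (simp add: orth_proj_Cons)
  qed
qed simp

lemma cinner_orth_proj_member:
  assumes "orthonormal_list E" "e \<in> set E"
  shows "cinner e (orth_proj E y) = cinner e y"
  by (metis assms cinner_orth_proj_left orth_proj_member)

lemma orth_proj_idem:
  assumes "orthonormal_list E"
  shows "orth_proj E (orth_proj E y) = orth_proj E y"
proof -
  have "map (\<lambda>e. scaleC (cinner e (orth_proj E y)) e) E = map (\<lambda>e. scaleC (cinner e y) e) E"
    by (rule map_cong) (simp_all add: cinner_orth_proj_member[OF assms])
  then show ?thesis by (simp only: orth_proj_def[of E "orth_proj E y"]) (simp only: orth_proj_def)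
qed

lemma orth_proj_eq_zero_if_orthogonal:
  assumes "orth_proj E a = a" "\<forall>e\<in>set E. cinner e a = 0"
  shows "a = 0"
proof -
  have "orth_proj E a = sum_list (map (\<lambda>e. 0) E)"
    unfolding orth_proj_def by (rule arg_cong[where f = sum_list], rule map_cong) (simp_all add: assms(2))
  then show ?thesis using assms(1) by simp
qed

lemma orth_proj_linear_image_fixed:
  assumes "\<And>f. f \<in> set E \<Longrightarrow> orth_proj G (h f) = h f" "bounded_clinear h" "orth_proj E y = y"
  shows "orth_proj G (h y) = h y"
proof -
  have "h y = h (orth_proj E y)" using assms(3) by simp
  also have "\<dots> = sum_list (map (\<lambda>f. scaleC (cinner f y) (h f)) E)"
    unfolding orth_proj_def
    by (simp add: bounded_clinear_sum_list[OF assms(2)] bounded_clinear_scaleC[OF assms(2)])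
  finally show ?thesis using assms(1) by (simp add: orth_proj_sum_list_fixed)
qed

lemma gram_schmidt_exists:
  fixes W :: "'a::complex_inner list"
  shows "\<exists>G. orthonormal_list G \<and> length G \<le> length W \<and> (\<forall>w\<in>set W. orth_proj G w = w)"
proof (induction W)
  case (Cons w W)
  then obtain G where G: "orthonormal_list G" "length G \<le> length W"
    "\<And>v. v \<in> set W \<Longrightarrow> orth_proj G v = v" by blast
  define r where "r = w - orth_proj G w"
  have pr: "orth_proj G r = 0" unfolding r_def by (simp add: orth_proj_diff orth_proj_idem[OF G(1)])
  show ?case
  proof (cases "r = 0")
    case True
    then show ?thesis using G unfolding r_def by (intro exI[of _ G]) auto
  next
    case False
    define g where "g = scaleC (complex_of_real (1 / norm r)) r"
    have pg: "orth_proj G g = 0" unfolding g_def by (simp add: orth_proj_scaleC pr)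
    have "cinner f g = 0" if "f \<in> set G" for f
      using that G(1) by (simp add: cinner_orth_proj_member[symmetric] cinner_orth_proj_left[symmetric] pg)
    then have "cinner g f = 0" if "f \<in> set G" for f
      using that cnj_cinner[of f g] by simp
    moreover have "norm g = 1" unfolding g_def using False by (rule norm_scaleC_inverse_norm)
    ultimately have og: "orthonormal_list (g # G)" using G(1) by simp
    have "cinner r (orth_proj G w) = 0" by (simp add: cinner_orth_proj_left[symmetric] pr)
    moreover have "cinner r w = cinner r r + cinner r (orth_proj G w)"
      using cinner_add_right[of r r "orth_proj G w"] by (simp add: r_def)
    ultimately have "cinner r w = complex_of_real ((norm r)\<^sup>2)"
      by (simp add: cinner_self_eq_norm_power2)
    then have "scaleC (cinner g w) g = r"
      unfolding g_def using False
      by (simp add: cinner_scaleC_left scaleC_scaleC power2_eq_square scaleC_one flip: of_real_mult)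
    then have "orth_proj (g # G) w = w" by (simp add: orth_proj_Cons r_def)
    moreover have "orth_proj (g # G) v = v" if "v \<in> set W" for v
    proof -
      have "cinner g v = cinner g (orth_proj G v)" using G(3)[OF that] by simp
      also have "\<dots> = 0" by (simp add: cinner_orth_proj_left[symmetric] pg)
      finally show ?thesis using G(3)[OF that] by (simp add: orth_proj_Cons)
    qed
    ultimately show ?thesis using og G(2) by (intro exI[of _ "g # G"]) auto
  qed
qed simp

definition span_unit_ball :: "'a::complex_inner list \<Rightarrow> 'a set" where
  "span_unit_ball E = {y. norm y \<le> 1 \<and> orth_proj E y = y}"

lemma zero_in_span_unit_ball: "0 \<in> span_unit_ball E"
  unfolding span_unit_ball_def by simp

lemma scaleC_in_span_unit_ball:
  "z \<in> span_unit_ball E \<Longrightarrow> cmod c \<le> 1 \<Longrightarrow> scaleC c z \<in> span_unit_ball E"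
  unfolding span_unit_ball_def by (auto simp: norm_scaleC orth_proj_scaleC intro: mult_le_one)

lemma member_in_span_unit_ball: "orthonormal_list E \<Longrightarrow> e \<in> set E \<Longrightarrow> e \<in> span_unit_ball E"
  unfolding span_unit_ball_def using orthonormal_list_norm orth_proj_member by fastforce

fun disc_combinations :: "'a::complex_inner list \<Rightarrow> 'a set" where
  "disc_combinations [] = {0}"
| "disc_combinations (e # E) = (\<lambda>p. scaleC (fst p) e + snd p) ` (cball 0 1 \<times> disc_combinations E)"

lemma compact_disc_combinations: "compact (disc_combinations E)"
proof (induction E)
  case (Cons e E)
  have "continuous_on (cball 0 1 \<times> disc_combinations E) (\<lambda>p::complex \<times> 'a. scaleC (fst p) e + snd p)"
    by (intro continuous_intros)
  then show ?case using Cons by (simp add: compact_continuous_image compact_Times)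
qed simp

lemma sum_list_in_disc_combinations:
  "(\<forall>e\<in>set E. cmod (f e) \<le> 1) \<Longrightarrow> sum_list (map (\<lambda>e. scaleC (f e) e) E) \<in> disc_combinations E"
  by (induction E) (auto intro!: image_eqI[where x = "(f _, _)"])

lemma continuous_orth_proj: "continuous_on UNIV (orth_proj E)"
  unfolding orth_proj_def[abs_def]
  by (induction E) (simp_all add: continuous_intros)

lemma compact_span_unit_ball:
  assumes "orthonormal_list E"
  shows "compact (span_unit_ball E)"
proof -
  have "orth_proj E y \<in> disc_combinations E" if "norm y \<le> 1" for y
  proof -
    have "cmod (cinner e y) \<le> 1" if "e \<in> set E" for e
      using norm_cinner_le[of e y] orthonormal_list_norm[OF assms that] \<open>norm y \<le> 1\<close> by simp
    then show ?thesis unfolding orth_proj_def by (simp add: sum_list_in_disc_combinations)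
  qed
  then have "span_unit_ball E = (cball 0 1 \<inter> {y. orth_proj E y = y}) \<inter> disc_combinations E"
    unfolding span_unit_ball_def by (auto, metis)
  moreover have "closed (cball 0 1 \<inter> {y. orth_proj E y = y})"
    by (intro closed_Int closed_cball closed_Collect_eq continuous_orth_proj continuous_on_id)
  ultimately show ?thesis using closed_Int_compact[OF _ compact_disc_combinations] by simp
qed

section \<open>Finite rank operators and their singular value decomposition\<close>

definition clinear_form :: "('a::complex_inner \<Rightarrow> complex) \<Rightarrow> bool" where
  "clinear_form g \<longleftrightarrow> (\<forall>x y. g (x + y) = g x + g y) \<and> (\<forall>c x. g (scaleC c x) = c * g x)"

definition antilinear_form :: "('a::complex_inner \<Rightarrow> complex) \<Rightarrow> bool" where
  "antilinear_form g \<longleftrightarrow> (\<forall>x y. g (x + y) = g x + g y) \<and> (\<forall>c x. g (scaleC c x) = cnj c * g x)"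

lemma clinear_form_add: "clinear_form g \<Longrightarrow> g (x + y) = g x + g y"
  and clinear_form_scaleC: "clinear_form g \<Longrightarrow> g (scaleC c x) = c * g x"
  and antilinear_form_add: "antilinear_form g \<Longrightarrow> g (x + y) = g x + g y"
  and antilinear_form_scaleC: "antilinear_form g \<Longrightarrow> g (scaleC c x) = cnj c * g x"
  unfolding clinear_form_def antilinear_form_def by blast+

lemma clinear_form_zero: "clinear_form g \<Longrightarrow> g 0 = 0"
  and antilinear_form_zero: "antilinear_form g \<Longrightarrow> g 0 = 0"
  using clinear_form_scaleC[of g 0 0] antilinear_form_scaleC[of g 0 0] by simp_all

lemma clinear_form_sum_list:
  "clinear_form g \<Longrightarrow>
    g (sum_list (map (\<lambda>p. scaleC (f p) (h p)) L)) = sum_list (map (\<lambda>p. f p * g (h p)) L)"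
  by (induction L) (simp_all add: clinear_form_zero clinear_form_add clinear_form_scaleC)

lemma antilinear_form_sum_list:
  "antilinear_form g \<Longrightarrow>
    g (sum_list (map (\<lambda>p. scaleC (f p) (h p)) L)) = sum_list (map (\<lambda>p. cnj (f p) * g (h p)) L)"
  by (induction L) (simp_all add: antilinear_form_zero antilinear_form_add antilinear_form_scaleC)

lemma sum_list_map_swap:
  fixes f :: "'b \<Rightarrow> 'c \<Rightarrow> 'd::comm_monoid_add"
  shows "sum_list (map (\<lambda>p. sum_list (map (f p) E)) L) = sum_list (map (\<lambda>e. sum_list (map (\<lambda>p. f p e) L)) E)"
  by (induction L) (simp_all add: sum_list_addf)

text \<open>A list of pairs \<open>(\<alpha>, \<beta>)\<close> stands for the tensor \<open>\<Sum> \<alpha>\<^sup>* \<otimes> \<beta>\<close>, i.e. for the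
  finite rank operator \<open>w \<mapsto> \<Sum> \<langle>\<alpha>, w\<rangle> \<beta>\<close>; as \<open>\<alpha>\<close> enters conjugated, it is tested
  against antilinear forms.\<close>

definition tensor_pairing :: "('a \<Rightarrow> complex) \<Rightarrow> ('a \<Rightarrow> complex) \<Rightarrow> ('a \<times> 'a) list \<Rightarrow> complex" where
  "tensor_pairing \<phi> \<psi> L = sum_list (map (\<lambda>p. \<phi> (fst p) * \<psi> (snd p)) L)"

definition tensor_equiv :: "('a::complex_inner \<times> 'a) list \<Rightarrow> ('a \<times> 'a) list \<Rightarrow> bool" where
  "tensor_equiv L L' \<longleftrightarrow>
     (\<forall>\<phi> \<psi>. antilinear_form \<phi> \<longrightarrow> clinear_form \<psi> \<longrightarrow> tensor_pairing \<phi> \<psi> L = tensor_pairing \<phi> \<psi> L')"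

lemma tensor_pairing_Cons: "tensor_pairing \<phi> \<psi> (p # L) = \<phi> (fst p) * \<psi> (snd p) + tensor_pairing \<phi> \<psi> L"
  by (simp add: tensor_pairing_def)

lemma tensor_equiv_trans: "tensor_equiv L1 L2 \<Longrightarrow> tensor_equiv L2 L3 \<Longrightarrow> tensor_equiv L1 L3"
  unfolding tensor_equiv_def by metis

lemma tensor_equiv_Cons: "tensor_equiv L L' \<Longrightarrow> tensor_equiv (p # L) (p # L')"
  unfolding tensor_equiv_def by (simp add: tensor_pairing_Cons)

definition finrank_op :: "('a::complex_inner \<times> 'a) list \<Rightarrow> 'a \<Rightarrow> 'a" where
  "finrank_op L w = sum_list (map (\<lambda>p. scaleC (cinner (fst p) w) (snd p)) L)"

definition finrank_adj :: "('a::complex_inner \<times> 'a) list \<Rightarrow> 'a \<Rightarrow> 'a" where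
  "finrank_adj L z = sum_list (map (\<lambda>p. scaleC (cinner (snd p) z) (fst p)) L)"

definition finrank_form :: "('a::complex_inner \<times> 'a) list \<Rightarrow> 'a \<Rightarrow> 'a \<Rightarrow> complex" where
  "finrank_form L w z = sum_list (map (\<lambda>p. cinner (fst p) w * cinner z (snd p)) L)"

lemma finrank_form_eq_cinner_op: "finrank_form L w z = cinner z (finrank_op L w)"
  unfolding finrank_form_def finrank_op_def cinner_sum_list_right by (simp add: cinner_scaleC_right)

lemma finrank_form_eq_cinner_adj: "finrank_form L w z = cinner (finrank_adj L z) w"
  unfolding finrank_form_def finrank_adj_def cinner_sum_list_left
  by (simp add: cinner_scaleC_left cnj_cinner mult.commute)

lemma finrank_form_scaleC_right: "finrank_form L w (scaleC c z) = cnj c * finrank_form L w z"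
  by (simp add: finrank_form_eq_cinner_op cinner_scaleC_left)

lemma continuous_finrank_form: "continuous_on UNIV (\<lambda>q. finrank_form L (fst q) (snd q))"
  unfolding finrank_form_def by (induction L) (simp_all add: continuous_intros)

lemma orth_proj_finrank_op:
  "\<forall>p\<in>set L. orth_proj E (snd p) = snd p \<Longrightarrow> orth_proj E (finrank_op L w) = finrank_op L w"
  unfolding finrank_op_def by (rule orth_proj_sum_list_fixed) simp

lemma orth_proj_finrank_adj:
  "\<forall>p\<in>set L. orth_proj E (fst p) = fst p \<Longrightarrow> orth_proj E (finrank_adj L z) = finrank_adj L z"
  unfolding finrank_adj_def by (rule orth_proj_sum_list_fixed) simp

definition trace_pairing :: "('a::complex_inner \<times> 'a) list \<Rightarrow> ('a \<Rightarrow> 'a) \<Rightarrow> complex" where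
  "trace_pairing L x = sum_list (map (\<lambda>p. cinner (fst p) (x (snd p))) L)"

definition sum_sq_norm_fst :: "('a::complex_inner \<times> 'a) list \<Rightarrow> real" where
  "sum_sq_norm_fst L = sum_list (map (\<lambda>p. (norm (fst p))\<^sup>2) L)"

definition balanced_pairs :: "('a::real_normed_vector \<times> 'a) list \<Rightarrow> bool" where
  "balanced_pairs L \<longleftrightarrow> (\<forall>p\<in>set L. norm (fst p) = norm (snd p))"

definition contraction :: "('a::complex_inner \<Rightarrow> 'a) \<Rightarrow> bool" where
  "contraction x \<longleftrightarrow> bounded_clinear x \<and> (\<forall>h. norm (x h) \<le> norm h)"

lemma eq_scaleC_if_Re_cinner_eq:
  assumes x: "norm x \<le> \<sigma>" and y: "norm y \<le> 1" and xy: "Re (cinner x y) = \<sigma>"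
  shows "x = scaleC (complex_of_real \<sigma>) y"
proof -
  have \<sigma>: "0 \<le> \<sigma>" using x norm_ge_zero order_trans by blast
  have "(norm x)\<^sup>2 \<le> \<sigma>\<^sup>2" using x by (simp add: power_mono)
  moreover have "\<sigma>\<^sup>2 * (norm y)\<^sup>2 \<le> \<sigma>\<^sup>2"
    using y by (simp add: mult_left_le power_le_one)
  moreover have "(norm (x - scaleC (complex_of_real \<sigma>) y))\<^sup>2
      = (norm x)\<^sup>2 + \<sigma>\<^sup>2 * (norm y)\<^sup>2 - 2 * \<sigma>\<^sup>2"
  proof -
    have "Re (cinner x (scaleC (complex_of_real \<sigma>) y)) = \<sigma>\<^sup>2"
      using xy by (simp add: cinner_scaleC_right power2_eq_square)
    then show ?thesis
      using \<sigma> by (simp only: power2_norm_diff norm_scaleC norm_of_real power_mult_distrib)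
  qed
  ultimately have "(norm (x - scaleC (complex_of_real \<sigma>) y))\<^sup>2 \<le> 0" by linarith
  then show ?thesis by simp
qed

lemma norm_finrank_op_le:
  assumes fixL: "\<forall>p\<in>set L. orth_proj E' (snd p) = snd p"
    and max: "\<And>w z. w \<in> span_unit_ball E \<Longrightarrow> z \<in> span_unit_ball E' \<Longrightarrow> cmod (finrank_form L w z) \<le> \<sigma>"
    and w: "w \<in> span_unit_ball E" and \<sigma>: "0 \<le> \<sigma>"
  shows "norm (finrank_op L w) \<le> \<sigma>"
proof (cases "finrank_op L w = 0")
  case False
  define z where "z = scaleC (complex_of_real (1 / norm (finrank_op L w))) (finrank_op L w)"
  have "z \<in> span_unit_ball E'" unfolding z_def span_unit_ball_def using False
    by (simp add: norm_scaleC norm_divide orth_proj_scaleC orth_proj_finrank_op fixL)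
  moreover have "finrank_form L w z = complex_of_real (norm (finrank_op L w))"
    unfolding finrank_form_eq_cinner_op z_def
    by (metis cinner_scaleC_inverse_norm cnj_cinner complex_cnj_complex_of_real)
  ultimately show ?thesis using max[OF w] by fastforce
qed (simp add: \<sigma>)

lemma norm_finrank_adj_le:
  assumes fixL: "\<forall>p\<in>set L. orth_proj E (fst p) = fst p"
    and max: "\<And>w z. w \<in> span_unit_ball E \<Longrightarrow> z \<in> span_unit_ball E' \<Longrightarrow> cmod (finrank_form L w z) \<le> \<sigma>"
    and z: "z \<in> span_unit_ball E'" and \<sigma>: "0 \<le> \<sigma>"
  shows "norm (finrank_adj L z) \<le> \<sigma>"
proof (cases "finrank_adj L z = 0")
  case False
  define w where "w = scaleC (complex_of_real (1 / norm (finrank_adj L z))) (finrank_adj L z)"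
  have "w \<in> span_unit_ball E" unfolding w_def span_unit_ball_def using False
    by (simp add: norm_scaleC norm_divide orth_proj_scaleC orth_proj_finrank_adj fixL)
  moreover have "finrank_form L w z = complex_of_real (norm (finrank_adj L z))"
    unfolding finrank_form_eq_cinner_adj w_def
    by (metis cinner_scaleC_inverse_norm cnj_cinner complex_cnj_complex_of_real)
  ultimately show ?thesis using max[OF _ z] by fastforce
qed (simp add: \<sigma>)

lemma finrank_form_attains_max:
  fixes L :: "('a::complex_inner \<times> 'a) list"
  assumes E: "orthonormal_list E" and E': "orthonormal_list E'"
  obtains a b \<sigma> where "a \<in> span_unit_ball E" "b \<in> span_unit_ball E'" "Re (finrank_form L a b) = \<sigma>"
    "\<And>w z. w \<in> span_unit_ball E \<Longrightarrow> z \<in> span_unit_ball E' \<Longrightarrow> cmod (finrank_form L w z) \<le> \<sigma>"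
proof -
  have cpt: "compact (span_unit_ball E \<times> span_unit_ball E')"
    using compact_span_unit_ball[OF E] compact_span_unit_ball[OF E'] by (rule compact_Times)
  have ne: "span_unit_ball E \<times> span_unit_ball E' \<noteq> {}" using zero_in_span_unit_ball by blast
  have "continuous_on (span_unit_ball E \<times> span_unit_ball E') (\<lambda>q. Re (finrank_form L (fst q) (snd q)))"
    by (intro continuous_intros continuous_on_subset[OF continuous_finrank_form]) simp
  then obtain q where q: "q \<in> span_unit_ball E \<times> span_unit_ball E'"
    "\<And>q'. q' \<in> span_unit_ball E \<times> span_unit_ball E' \<Longrightarrow>
      Re (finrank_form L (fst q') (snd q')) \<le> Re (finrank_form L (fst q) (snd q))"
    using continuous_attains_sup[OF cpt ne] by blast
  define a b where "a = fst q" and "b = snd q"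
  have maxi: "Re (finrank_form L w z) \<le> Re (finrank_form L a b)"
    if "w \<in> span_unit_ball E" "z \<in> span_unit_ball E'" for w z
    using q(2)[of "(w, z)"] that unfolding a_def b_def by auto
  have "cmod (finrank_form L w z) \<le> Re (finrank_form L a b)"
    if w: "w \<in> span_unit_ball E" and z: "z \<in> span_unit_ball E'" for w z
  proof -
    obtain u where u: "cmod u = 1" "u * finrank_form L w z = complex_of_real (cmod (finrank_form L w z))"
      using complex_phase_exists by blast
    have "finrank_form L w (scaleC (cnj u) z) = complex_of_real (cmod (finrank_form L w z))"
      by (simp add: finrank_form_scaleC_right u(2))
    moreover have "scaleC (cnj u) z \<in> span_unit_ball E'" using z u(1) by (intro scaleC_in_span_unit_ball) auto
    ultimately show ?thesis using maxi[OF w] by fastforce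
  qed
  moreover have "a \<in> span_unit_ball E" "b \<in> span_unit_ball E'" using q(1) unfolding a_def b_def by auto
  ultimately show ?thesis using that by blast
qed

lemma top_singular_pair:
  fixes L :: "('a::complex_inner \<times> 'a) list"
  assumes E: "orthonormal_list E" and E': "orthonormal_list E'"
    and fixL: "\<forall>p\<in>set L. orth_proj E (fst p) = fst p \<and> orth_proj E' (snd p) = snd p"
  obtains a b \<sigma> where "a \<in> span_unit_ball E" "b \<in> span_unit_ball E'" "0 \<le> \<sigma>"
    "finrank_form L a b = complex_of_real \<sigma>"
    "\<And>w. w \<in> span_unit_ball E \<Longrightarrow> norm (finrank_op L w) \<le> \<sigma>"
    "finrank_op L a = scaleC (complex_of_real \<sigma>) b"
    "finrank_adj L b = scaleC (complex_of_real \<sigma>) a"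
    "0 < \<sigma> \<Longrightarrow> norm a = 1 \<and> norm b = 1"
proof -
  obtain a b \<sigma> where a: "a \<in> span_unit_ball E" and b: "b \<in> span_unit_ball E'"
    and \<sigma>_def: "Re (finrank_form L a b) = \<sigma>"
    and max: "\<And>w z. w \<in> span_unit_ball E \<Longrightarrow> z \<in> span_unit_ball E' \<Longrightarrow> cmod (finrank_form L w z) \<le> \<sigma>"
    using finrank_form_attains_max[OF E E'] by blast
  have \<sigma>0: "0 \<le> \<sigma>"
    using max[OF zero_in_span_unit_ball zero_in_span_unit_ball] norm_ge_zero order_trans by blast
  have nS: "norm (finrank_op L w) \<le> \<sigma>" if "w \<in> span_unit_ball E" for w
    by (rule norm_finrank_op_le[where E = E and E' = E']) (use fixL max that \<sigma>0 in auto)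
  have nSa: "norm (finrank_adj L z) \<le> \<sigma>" if "z \<in> span_unit_ball E'" for z
    by (rule norm_finrank_adj_le[where E = E and E' = E']) (use fixL max that \<sigma>0 in auto)
  have "norm a \<le> 1" "norm b \<le> 1" using a b unfolding span_unit_ball_def by auto
  moreover have "Re (cinner (finrank_op L a) b) = \<sigma>"
    using arg_cong[where f = Re, OF cnj_cinner[of b "finrank_op L a"]] \<sigma>_def
    by (simp add: finrank_form_eq_cinner_op)
  moreover have "Re (cinner (finrank_adj L b) a) = \<sigma>"
    using \<sigma>_def by (simp add: finrank_form_eq_cinner_adj)
  ultimately have Sa: "finrank_op L a = scaleC (complex_of_real \<sigma>) b"
    and Sb: "finrank_adj L b = scaleC (complex_of_real \<sigma>) a"
    using nS[OF a] nSa[OF b] eq_scaleC_if_Re_cinner_eq by blast+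
  have Fb: "finrank_form L a b = complex_of_real (\<sigma> * (norm b)\<^sup>2)"
    by (simp add: finrank_form_eq_cinner_op Sa cinner_scaleC_right cinner_self_eq_norm_power2)
  have Fa: "finrank_form L a b = complex_of_real (\<sigma> * (norm a)\<^sup>2)"
    by (simp add: finrank_form_eq_cinner_adj Sb cinner_scaleC_left cinner_self_eq_norm_power2)
  have "\<sigma> * (norm b)\<^sup>2 = \<sigma>" using \<sigma>_def unfolding Fb by simp
  moreover have "\<sigma> * (norm a)\<^sup>2 = \<sigma>" using \<sigma>_def unfolding Fa by simp
  ultimately have nab: "0 < \<sigma> \<Longrightarrow> norm a = 1 \<and> norm b = 1"
    using norm_ge_zero[of a] norm_ge_zero[of b] by (auto simp: power2_eq_1_iff)
  then have "finrank_form L a b = complex_of_real \<sigma>"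
    using Fb \<sigma>0 by (cases "\<sigma> = 0") auto
  note this nab
  then show ?thesis using that[OF a b \<sigma>0 _ nS Sa Sb] by blast
qed

definition proj_perp :: "'a::complex_inner \<Rightarrow> 'a \<Rightarrow> 'a" where
  "proj_perp a h = h - scaleC (cinner a h) a"

lemma proj_perp_add: "proj_perp a (x + y) = proj_perp a x + proj_perp a y"
  unfolding proj_perp_def by (simp add: cinner_add_right scaleC_add_left algebra_simps)

lemma proj_perp_scaleC: "proj_perp a (scaleC c x) = scaleC c (proj_perp a x)"
  unfolding proj_perp_def by (simp add: cinner_scaleC_right scaleC_diff_right scaleC_scaleC)

lemma proj_perp_sum_list:
  "proj_perp a (sum_list (map (\<lambda>p. scaleC (f p) (h p)) L)) = sum_list (map (\<lambda>p. scaleC (f p) (proj_perp a (h p))) L)"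
  by (induction L) (simp_all add: proj_perp_add proj_perp_scaleC, simp add: proj_perp_def)

lemma cinner_proj_perp: "norm a = 1 \<Longrightarrow> cinner a (proj_perp a h) = 0"
  unfolding proj_perp_def by (simp add: cinner_diff_right cinner_scaleC_right cinner_self_eq_norm_power2)

lemma proj_perp_self: "norm a = 1 \<Longrightarrow> proj_perp a a = 0"
  unfolding proj_perp_def by (simp add: cinner_self_eq_norm_power2 scaleC_one)

lemma cinner_proj_perp_left: "cinner (proj_perp a x) y = cinner x (proj_perp a y)"
  unfolding proj_perp_def cinner_diff_left cinner_diff_right cinner_scaleC_left cinner_scaleC_right cnj_cinner
  by (simp add: mult.commute)

lemma proj_perp_decomp: "h = proj_perp a h + scaleC (cinner a h) a"
  unfolding proj_perp_def by simp

lemma power2_norm_proj_perp: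
  assumes "norm a = 1"
  shows "(norm h)\<^sup>2 = (cmod (cinner a h))\<^sup>2 + (norm (proj_perp a h))\<^sup>2"
proof -
  have "(norm h)\<^sup>2 = (norm (scaleC (cinner a h) a + proj_perp a h))\<^sup>2"
    using proj_perp_decomp[of h a] by (simp add: add.commute)
  also have "\<dots> = (cmod (cinner a h))\<^sup>2 + (norm (proj_perp a h))\<^sup>2"
    using assms by (simp add: power2_norm_add_orthogonal cinner_scaleC_left cinner_proj_perp norm_scaleC)
  finally show ?thesis .
qed

lemma norm_proj_perp_le:
  assumes "norm a = 1"
  shows "norm (proj_perp a h) \<le> norm h"
proof -
  have "(norm (proj_perp a h))\<^sup>2 \<le> (norm h)\<^sup>2"
    using power2_norm_proj_perp[OF assms, of h] zero_le_power2[of "cmod (cinner a h)"] by linarith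
  then show ?thesis by (rule power2_le_imp_le) simp
qed

lemma bounded_clinear_proj_perp: "norm a = 1 \<Longrightarrow> bounded_clinear (proj_perp a)"
  by (intro bounded_clinear_intro[where K = 1]) (simp_all add: proj_perp_add proj_perp_scaleC norm_proj_perp_le)

lemma tensor_equiv_Nil_if_finrank_op_zero:
  fixes L :: "('a::complex_inner \<times> 'a) list"
  assumes E: "orthonormal_list E" and fixL: "\<forall>p\<in>set L. orth_proj E (fst p) = fst p"
    and zero: "\<And>w. w \<in> span_unit_ball E \<Longrightarrow> finrank_op L w = 0"
  shows "tensor_equiv L []"
  unfolding tensor_equiv_def
proof (intro allI impI)
  fix \<phi> \<psi> :: "'a \<Rightarrow> complex" assume \<phi>: "antilinear_form \<phi>" and \<psi>: "clinear_form \<psi>"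
  have "\<phi> (fst p) * \<psi> (snd p) = sum_list (map (\<lambda>e. cinner (fst p) e * \<phi> e * \<psi> (snd p)) E)"
    if "p \<in> set L" for p
  proof -
    have "\<phi> (fst p) = \<phi> (orth_proj E (fst p))" using fixL that by simp
    also have "\<dots> = sum_list (map (\<lambda>e. cinner (fst p) e * \<phi> e) E)"
      unfolding orth_proj_def by (simp add: antilinear_form_sum_list[OF \<phi>] cnj_cinner)
    finally show ?thesis by (simp add: sum_list_mult_const)
  qed
  then have "tensor_pairing \<phi> \<psi> L =
      sum_list (map (\<lambda>p. sum_list (map (\<lambda>e. cinner (fst p) e * \<phi> e * \<psi> (snd p)) E)) L)"
    unfolding tensor_pairing_def by (rule arg_cong[where f = sum_list, OF map_cong[OF refl]])
  also have "\<dots> = sum_list (map (\<lambda>e. sum_list (map (\<lambda>p. cinner (fst p) e * \<phi> e * \<psi> (snd p)) L)) E)"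
    by (rule sum_list_map_swap)
  also have "\<dots> = sum_list (map (\<lambda>e. \<phi> e * \<psi> (finrank_op L e)) E)"
    unfolding finrank_op_def clinear_form_sum_list[OF \<psi>] by (simp add: sum_list_const_mult mult_ac)
  also have "\<dots> = sum_list (map (\<lambda>e. 0) E)"
    by (rule arg_cong[where f = sum_list], rule map_cong)
      (simp_all add: zero member_in_span_unit_ball[OF E] clinear_form_zero[OF \<psi>])
  finally show "tensor_pairing \<phi> \<psi> L = tensor_pairing \<phi> \<psi> []" by (simp add: tensor_pairing_def)
qed

definition deflate :: "'a::complex_inner \<Rightarrow> 'a \<Rightarrow> ('a \<times> 'a) list \<Rightarrow> ('a \<times> 'a) list" where
  "deflate a b L = map (\<lambda>p. (proj_perp a (fst p), proj_perp b (snd p))) L"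

lemma tensor_pairing_deflate:
  assumes \<phi>: "antilinear_form \<phi>" and \<psi>: "clinear_form \<psi>"
  shows "tensor_pairing \<phi> \<psi> L = tensor_pairing \<phi> \<psi> (deflate a b L)
      + \<psi> b * \<phi> (proj_perp a (finrank_adj L b)) + \<phi> a * \<psi> (proj_perp b (finrank_op L a))
      + \<phi> a * \<psi> b * finrank_form L a b"
proof -
  have \<phi>_decomp: "\<phi> x = \<phi> (proj_perp a x) + cinner x a * \<phi> a" for x
    using proj_perp_decomp[of x a]
    by (metis antilinear_form_add[OF \<phi>] antilinear_form_scaleC[OF \<phi>] cnj_cinner)
  have \<psi>_decomp: "\<psi> y = \<psi> (proj_perp b y) + cinner b y * \<psi> b" for y
    using proj_perp_decomp[of y b]
    by (metis clinear_form_add[OF \<psi>] clinear_form_scaleC[OF \<psi>])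
  have "\<phi> (proj_perp a (finrank_adj L b)) = sum_list (map (\<lambda>p. cinner b (snd p) * \<phi> (proj_perp a (fst p))) L)"
    unfolding finrank_adj_def proj_perp_sum_list by (simp add: antilinear_form_sum_list[OF \<phi>] cnj_cinner)
  moreover have "\<psi> (proj_perp b (finrank_op L a)) = sum_list (map (\<lambda>p. cinner (fst p) a * \<psi> (proj_perp b (snd p))) L)"
    unfolding finrank_op_def proj_perp_sum_list by (simp add: clinear_form_sum_list[OF \<psi>])
  ultimately show ?thesis
    unfolding tensor_pairing_def deflate_def finrank_form_def
    by (subst \<phi>_decomp, subst \<psi>_decomp)
      (simp add: algebra_simps sum_list_addf sum_list_const_mult o_def)
qed

text \<open>Splitting off a singular pair: the cross terms of the decomposition vanish because
  \<open>a\<close> and \<open>b\<close> are singular vectors.\<close>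

lemma tensor_equiv_deflate:
  fixes L :: "('a::complex_inner \<times> 'a) list"
  assumes na: "norm a = 1" and nb: "norm b = 1" and \<sigma>: "\<sigma> \<ge> 0"
    and Sa: "finrank_op L a = scaleC (complex_of_real \<sigma>) b"
    and Sb: "finrank_adj L b = scaleC (complex_of_real \<sigma>) a"
    and Fab: "finrank_form L a b = complex_of_real \<sigma>"
  shows "tensor_equiv L ((scaleC (complex_of_real (sqrt \<sigma>)) a, scaleC (complex_of_real (sqrt \<sigma>)) b)
           # deflate a b L)"
  unfolding tensor_equiv_def
proof (intro allI impI)
  fix \<phi> \<psi> :: "'a \<Rightarrow> complex"
  assume \<phi>: "antilinear_form \<phi>" and \<psi>: "clinear_form \<psi>"
  have "tensor_pairing \<phi> \<psi> L = tensor_pairing \<phi> \<psi> (deflate a b L) + \<phi> a * \<psi> b * complex_of_real \<sigma>"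
    unfolding tensor_pairing_deflate[OF \<phi> \<psi>, of L a b] Sa Sb Fab proj_perp_scaleC
      proj_perp_self[OF na] proj_perp_self[OF nb]
    by (simp add: antilinear_form_zero[OF \<phi>] clinear_form_zero[OF \<psi>])
  also have "\<phi> a * \<psi> b * complex_of_real \<sigma>
      = \<phi> (scaleC (complex_of_real (sqrt \<sigma>)) a) * \<psi> (scaleC (complex_of_real (sqrt \<sigma>)) b)"
    using \<sigma> by (simp add: antilinear_form_scaleC[OF \<phi>] clinear_form_scaleC[OF \<psi>] mult_ac flip: of_real_mult)
  finally show "tensor_pairing \<phi> \<psi> L = tensor_pairing \<phi> \<psi>
      ((scaleC (complex_of_real (sqrt \<sigma>)) a, scaleC (complex_of_real (sqrt \<sigma>)) b) # deflate a b L)"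
    by (simp add: tensor_pairing_Cons add.commute)
qed

lemma proj_perp_span_shrinks:
  fixes a :: "'a::complex_inner"
  assumes E: "orthonormal_list E" and na: "norm a = 1" and aE: "orth_proj E a = a"
  obtains G where "orthonormal_list G" "length G < length E"
    "\<And>y. orth_proj E y = y \<Longrightarrow> orth_proj G (proj_perp a y) = proj_perp a y"
proof -
  have "a \<noteq> 0" using na by auto
  then obtain e where e: "e \<in> set E" "cinner e a \<noteq> 0"
    using orth_proj_eq_zero_if_orthogonal[OF aE] by blast
  obtain E1 E2 where E12: "E = E1 @ e # E2" using split_list[OF e(1)] by blast
  obtain G where G: "orthonormal_list G" "length G \<le> length (map (proj_perp a) (E1 @ E2))"
      "\<And>w. w \<in> set (map (proj_perp a) (E1 @ E2)) \<Longrightarrow> orth_proj G w = w"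
    using gram_schmidt_exists by blast
  have fix12: "orth_proj G (proj_perp a f) = proj_perp a f" if "f \<in> set E1 \<or> f \<in> set E2" for f
    using G(3) that by auto
  txt \<open>\<open>proj_perp a e\<close> lies in the span of the other \<open>proj_perp a f\<close>, since
    \<open>0 = proj_perp a a = \<Sum>\<^sub>f \<langle>f, a\<rangle> proj_perp a f\<close> and \<open>\<langle>e, a\<rangle> \<noteq> 0\<close>.\<close>
  have fixe: "orth_proj G (proj_perp a e) = proj_perp a e"
  proof -
    define s1 s2 where "s1 = sum_list (map (\<lambda>f. scaleC (cinner f a) (proj_perp a f)) E1)"
      and "s2 = sum_list (map (\<lambda>f. scaleC (cinner f a) (proj_perp a f)) E2)"
    have "0 = proj_perp a (orth_proj E a)" using aE proj_perp_self[OF na] by simp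
    also have "\<dots> = s1 + scaleC (cinner e a) (proj_perp a e) + s2"
      unfolding orth_proj_def proj_perp_sum_list s1_def s2_def E12 by simp
    finally have "scaleC (cinner e a) (proj_perp a e) = - (s1 + s2)"
      by (simp add: algebra_simps eq_neg_iff_add_eq_0)
    moreover have "proj_perp a e = scaleC (inverse (cinner e a)) (scaleC (cinner e a) (proj_perp a e))"
      using e(2) by (simp add: scaleC_scaleC scaleC_one)
    ultimately have "proj_perp a e = scaleC (inverse (cinner e a)) (- (s1 + s2))" by simp
    moreover have "orth_proj G s1 = s1" "orth_proj G s2 = s2"
      unfolding s1_def s2_def by (rule orth_proj_sum_list_fixed, use fix12 in auto)+
    ultimately show ?thesis
      by (simp add: orth_proj_scaleC orth_proj_add orth_proj_minus orth_proj_diff)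
  qed
  have "orth_proj G (proj_perp a y) = proj_perp a y" if "orth_proj E y = y" for y
    by (rule orth_proj_linear_image_fixed[OF _ bounded_clinear_proj_perp[OF na] that])
      (use fix12 fixe E12 in auto)
  then show ?thesis using that G(1) G(2) E12 by simp
qed

lemma proj_perp_span:
  fixes b :: "'a::complex_inner"
  assumes nb: "norm b = 1"
  obtains G where "orthonormal_list G" "\<And>y. orth_proj E y = y \<Longrightarrow> orth_proj G (proj_perp b y) = proj_perp b y"
proof -
  obtain G where G: "orthonormal_list G" "\<And>w. w \<in> set (map (proj_perp b) E) \<Longrightarrow> orth_proj G w = w"
    using gram_schmidt_exists by blast
  have "orth_proj G (proj_perp b y) = proj_perp b y" if "orth_proj E y = y" for y
    by (rule orth_proj_linear_image_fixed[OF _ bounded_clinear_proj_perp[OF nb] that]) (use G(2) in auto)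
  then show ?thesis using that G(1) by blast
qed

lemma contraction_zero: "contraction (\<lambda>h. 0)"
  unfolding contraction_def by (simp add: bounded_clinear_zero_fun)

lemma contraction_extend:
  assumes na: "norm a = 1" and nb: "norm b = 1" and x: "contraction x"
  shows "contraction (\<lambda>h. scaleC (cinner b h) a + proj_perp a (x (proj_perp b h)))"
proof -
  have xb: "bounded_clinear x" and xn: "\<And>h. norm (x h) \<le> norm h"
    using x unfolding contraction_def by auto
  have n: "norm (scaleC (cinner b h) a + proj_perp a (x (proj_perp b h))) \<le> norm h" for h
  proof -
    have "(norm (scaleC (cinner b h) a + proj_perp a (x (proj_perp b h))))\<^sup>2
        = (cmod (cinner b h))\<^sup>2 + (norm (proj_perp a (x (proj_perp b h))))\<^sup>2"
      using na by (simp add: power2_norm_add_orthogonal cinner_scaleC_left cinner_proj_perp norm_scaleC)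
    also have "\<dots> \<le> (cmod (cinner b h))\<^sup>2 + (norm (proj_perp b h))\<^sup>2"
      using norm_proj_perp_le[OF na, of "x (proj_perp b h)"] xn[of "proj_perp b h"]
      by (intro add_left_mono power_mono) auto
    also have "\<dots> = (norm h)\<^sup>2" using power2_norm_proj_perp[OF nb, of h] by simp
    finally show ?thesis by (rule power2_le_imp_le) simp
  qed
  show ?thesis
    unfolding contraction_def
    by (intro conjI bounded_clinear_intro[where K = 1] allI)
      (use n in \<open>simp_all add: cinner_add_right cinner_scaleC_right scaleC_add_left scaleC_add_right
        scaleC_scaleC proj_perp_add proj_perp_scaleC bounded_clinear_add[OF xb]
        bounded_clinear_scaleC[OF xb] algebra_simps\<close>)
qed

lemma trace_pairing_extend:
  "trace_pairing L (\<lambda>h. scaleC (cinner b h) a + proj_perp a (x (proj_perp b h)))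
    = finrank_form L a b + trace_pairing (deflate a b L) x"
  unfolding trace_pairing_def finrank_form_def deflate_def
  by (simp add: cinner_add_right cinner_scaleC_right cinner_proj_perp_left mult.commute sum_list_addf o_def)

lemma balanced_decomposition_step:
  fixes L :: "('a::complex_inner \<times> 'a) list"
  assumes na: "norm a = 1" and nb: "norm b = 1" and \<sigma>0: "\<sigma> \<ge> 0"
    and Sa: "finrank_op L a = scaleC (complex_of_real \<sigma>) b"
    and Sb: "finrank_adj L b = scaleC (complex_of_real \<sigma>) a"
    and Fab: "finrank_form L a b = complex_of_real \<sigma>"
    and IH: "tensor_equiv (deflate a b L) L3" "balanced_pairs L3" "contraction x"
      "sum_sq_norm_fst L3 \<le> Re (trace_pairing (deflate a b L) x)"
  shows "\<exists>L2 x. tensor_equiv L L2 \<and> balanced_pairs L2 \<and> contraction x \<and>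
    sum_sq_norm_fst L2 \<le> Re (trace_pairing L x)"
proof (intro exI conjI)
  define L2 where "L2 = (scaleC (complex_of_real (sqrt \<sigma>)) a, scaleC (complex_of_real (sqrt \<sigma>)) b) # L3"
  show "tensor_equiv L L2"
    unfolding L2_def using tensor_equiv_deflate[OF na nb \<sigma>0 Sa Sb Fab] tensor_equiv_Cons[OF IH(1)]
    by (rule tensor_equiv_trans)
  show "balanced_pairs L2"
    using IH(2) \<sigma>0 na nb unfolding L2_def balanced_pairs_def by (simp add: norm_scaleC)
  show "contraction (\<lambda>h. scaleC (cinner b h) a + proj_perp a (x (proj_perp b h)))"
    by (rule contraction_extend[OF na nb IH(3)])
  have "sum_sq_norm_fst L2 = \<sigma> + sum_sq_norm_fst L3"
    using \<sigma>0 na unfolding L2_def sum_sq_norm_fst_def by (simp add: norm_scaleC)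
  then show "sum_sq_norm_fst L2 \<le> Re (trace_pairing L (\<lambda>h. scaleC (cinner b h) a + proj_perp a (x (proj_perp b h))))"
    using IH(4) by (simp add: trace_pairing_extend Fab)
qed

text \<open>Singular value decomposition of the finite rank operator of \<open>L\<close>, together with the
  contraction witnessing that its nuclear norm \<open>\<Sum> \<sigma>\<^sub>i\<close> is attained by the trace pairing.
  The induction is on the dimension of the span containing the first factors, which drops by
  one with every singular pair split off.\<close>

theorem balanced_decomposition:
  fixes L :: "('a::complex_inner \<times> 'a) list"
  assumes "orthonormal_list E" "orthonormal_list E'"
    and "\<forall>p\<in>set L. orth_proj E (fst p) = fst p \<and> orth_proj E' (snd p) = snd p"
  shows "\<exists>L2 x. tensor_equiv L L2 \<and> balanced_pairs L2 \<and> contraction x \<and>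
    sum_sq_norm_fst L2 \<le> Re (trace_pairing L x)"
  using assms
proof (induction "length E" arbitrary: E E' L rule: less_induct)
  case less
  note E = less.prems(1) and E' = less.prems(2) and fixL = less.prems(3)
  obtain a b \<sigma> where a: "a \<in> span_unit_ball E" and b: "b \<in> span_unit_ball E'" and \<sigma>0: "0 \<le> \<sigma>"
    and Fab: "finrank_form L a b = complex_of_real \<sigma>"
    and nS: "\<And>w. w \<in> span_unit_ball E \<Longrightarrow> norm (finrank_op L w) \<le> \<sigma>"
    and Sa: "finrank_op L a = scaleC (complex_of_real \<sigma>) b"
    and Sb: "finrank_adj L b = scaleC (complex_of_real \<sigma>) a"
    and nab: "0 < \<sigma> \<Longrightarrow> norm a = 1 \<and> norm b = 1"
    using top_singular_pair[OF E E' fixL] by blast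
  show ?case
  proof (cases "\<sigma> = 0")
    case True
    then have "tensor_equiv L []"
      using nS tensor_equiv_Nil_if_finrank_op_zero[OF E] fixL by fastforce
    then show ?thesis
      using contraction_zero
      by (intro exI[of _ "[]"] exI[of _ "\<lambda>h. 0"]) (simp add: balanced_pairs_def sum_sq_norm_fst_def trace_pairing_def)
  next
    case False
    then have na: "norm a = 1" and nb: "norm b = 1" using nab \<sigma>0 by auto
    have "orth_proj E a = a" "orth_proj E' b = b" using a b unfolding span_unit_ball_def by auto
    then obtain G where G: "orthonormal_list G" "length G < length E"
      "\<And>y. orth_proj E y = y \<Longrightarrow> orth_proj G (proj_perp a y) = proj_perp a y"
      using proj_perp_span_shrinks[OF E na] by blast
    obtain G' where G': "orthonormal_list G'"
      "\<And>y. orth_proj E' y = y \<Longrightarrow> orth_proj G' (proj_perp b y) = proj_perp b y"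
      using proj_perp_span[OF nb] by blast
    have "\<forall>p\<in>set (deflate a b L). orth_proj G (fst p) = fst p \<and> orth_proj G' (snd p) = snd p"
      unfolding deflate_def using fixL G(3) G'(2) by auto
    then obtain L3 x where "tensor_equiv (deflate a b L) L3" "balanced_pairs L3" "contraction x"
        "sum_sq_norm_fst L3 \<le> Re (trace_pairing (deflate a b L) x)"
      using less.hyps[OF G(2) G(1) G'(1)] by blast
    then show ?thesis by (rule balanced_decomposition_step[OF na nb \<sigma>0 Sa Sb Fab])
  qed
qed

definition ketbra :: "'a::complex_inner \<Rightarrow> 'a \<Rightarrow> 'a \<Rightarrow> 'a" where
  "ketbra u v = (\<lambda>h. scaleC (cinner v h) u)"

lemma bounded_clinear_ketbra: "bounded_clinear (ketbra u v)"
proof (rule bounded_clinear_intro[where K = "norm v * norm u"])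
  show "norm (ketbra u v h) \<le> norm h * (norm v * norm u)" for h
    using mult_right_mono[OF norm_cinner_le[of v h] norm_ge_zero[of u]]
    by (simp add: ketbra_def norm_scaleC mult_ac)
qed (simp_all add: ketbra_def cinner_add_right scaleC_add_left cinner_scaleC_right scaleC_scaleC)

lemma cadj_ketbra: "cadj (ketbra u v) = ketbra v u"
  by (rule cadj_eqI) (simp add: ketbra_def cinner_scaleC_left cinner_scaleC_right cnj_cinner mult.commute)

lemma ketbra_comp_left:
  fixes a :: "'a::chilbert_space \<Rightarrow> 'a"
  assumes "bounded_clinear a"
  shows "ketbra \<xi> \<xi> \<circ> a = ketbra \<xi> (cadj a \<xi>)"
  by (rule ext) (simp add: ketbra_def cinner_cadj_left[OF assms])

lemma comp_ketbra_right: "bounded_clinear b \<Longrightarrow> b \<circ> ketbra \<eta> \<eta> = ketbra (b \<eta>) \<eta>"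
  by (rule ext) (simp add: ketbra_def bounded_clinear_scaleC)

lemma rank_one_projection_ketbra:
  assumes "norm v = 1"
  shows "rank_one_projection (ketbra v v)"
proof -
  have v1: "cinner v v = 1" using assms by (simp add: cinner_self_eq_norm_power2)
  have "ketbra v v \<circ> ketbra v v = ketbra v v"
    by (rule ext) (simp add: ketbra_def cinner_scaleC_right v1)
  moreover have "range (ketbra v v) = {scaleC c v | c. True}"
  proof (intro equalityI subsetI)
    fix y assume "y \<in> {scaleC c v | c. True}"
    then obtain c where "y = scaleC c v" by blast
    then have "y = ketbra v v (scaleC c v)" by (simp add: ketbra_def cinner_scaleC_right v1)
    then show "y \<in> range (ketbra v v)" by blast
  qed (auto simp: ketbra_def)
  moreover have "v \<noteq> 0" using assms by auto
  ultimately show ?thesis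
    unfolding rank_one_projection_def using bounded_clinear_ketbra cadj_ketbra by blast
qed

lemma rank_one_projectionE:
  fixes p :: "'a::chilbert_space \<Rightarrow> 'a"
  assumes "rank_one_projection p"
  obtains v where "norm v = 1" "p = ketbra v v"
proof -
  have bp: "bounded_clinear p" and pp: "p \<circ> p = p" and ap: "cadj p = p"
    using assms unfolding rank_one_projection_def by auto
  obtain v0 where v0: "v0 \<noteq> 0" "range p = {scaleC c v0 | c. True}"
    using assms unfolding rank_one_projection_def by auto
  define v where "v = scaleC (complex_of_real (1 / norm v0)) v0"
  have nv: "norm v = 1" unfolding v_def using v0(1) by (rule norm_scaleC_inverse_norm)
  have "v \<in> range p" using v0(2) unfolding v_def by blast
  then have pv: "p v = v" using pp by (metis comp_apply rangeE)
  have "p h = ketbra v v h" for h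
  proof -
    obtain c0 where "p h = scaleC c0 v0" using v0(2) rangeI[of p h] by blast
    then have c: "p h = scaleC (c0 * complex_of_real (norm v0)) v"
      unfolding v_def scaleC_scaleC using v0(1) by (simp add: field_simps)
    have "cinner v (p h) = cinner v h"
      using cinner_cadj_right[OF bp, of v h] ap pv by simp
    then show ?thesis using c nv by (simp add: ketbra_def cinner_scaleC_right cinner_self_eq_norm_power2)
  qed
  then show ?thesis using that nv by blast
qed

lemma rank_one_projection_iff:
  fixes p :: "'a::chilbert_space \<Rightarrow> 'a"
  shows "rank_one_projection p \<longleftrightarrow> (\<exists>v. norm v = 1 \<and> p = ketbra v v)"
  by (metis rank_one_projectionE rank_one_projection_ketbra)

section \<open>The norm of an elementary operator\<close>

lemma elem_op_eq_sum_list: "elem_op l a b x h = sum_list (map (\<lambda>j. a j (x (b j h))) [1..<l+1])"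
proof -
  have "{1..l} = set [1..<l+1]" by auto
  then show ?thesis unfolding elem_op_def by (simp only: sum_set_upt_conv_sum_list_nat)
qed

lemma bounded_clinear_elem_op:
  assumes ab: "\<forall>j\<in>{1..l}. bounded_clinear (a j) \<and> bounded_clinear (b j)" and x: "bounded_clinear x"
  shows "bounded_clinear (elem_op l a b x)"
proof -
  have "bounded_clinear (\<lambda>h. sum_list (map (\<lambda>j. (a j \<circ> x \<circ> b j) h) [1..<l+1]))"
    using ab by (intro bounded_clinear_sum_list_fun bounded_clinear_compose x) auto
  then show ?thesis unfolding elem_op_eq_sum_list[abs_def] by simp
qed

lemma bdd_above_elem_op_norms:
  assumes ab: "\<forall>j\<in>{1..l}. bounded_clinear (a j) \<and> bounded_clinear (b j)"
  shows "bdd_above {onorm (elem_op l a b x) | x. bounded_clinear x \<and> onorm x \<le> 1}"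
proof -
  define C where "C = sum_list (map (\<lambda>j. onorm (a j) * onorm (b j)) [1..<l+1])"
  have ab': "bounded_linear (a j)" "bounded_linear (b j)" if "j \<in> set [1..<l+1]" for j
    using ab that by (auto intro: bounded_clinear_imp_bounded_linear)
  have C0: "C \<ge> 0" unfolding C_def
    by (rule sum_list_nonneg) (auto intro!: mult_nonneg_nonneg onorm_pos_le ab')
  have "onorm (elem_op l a b x) \<le> C" if x: "bounded_clinear x" "onorm x \<le> 1" for x
  proof (rule onorm_bound[OF C0])
    fix h
    have "norm (a j (x (b j h))) \<le> onorm (a j) * onorm (b j) * norm h" if j: "j \<in> set [1..<l+1]" for j
    proof -
      have "norm (a j (x (b j h))) \<le> onorm (a j) * norm (x (b j h))" by (rule onorm[OF ab'(1)[OF j]])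
      also have "\<dots> \<le> onorm (a j) * (onorm x * norm (b j h))"
        by (intro mult_left_mono bounded_clinear_norm_le_onorm x onorm_pos_le ab'(1)[OF j])
      also have "\<dots> \<le> onorm (a j) * (1 * (onorm (b j) * norm h))"
        by (intro mult_left_mono mult_mono x(2) onorm ab' j onorm_pos_le) simp_all
      finally show ?thesis by (simp add: mult_ac)
    qed
    then have "norm (elem_op l a b x h) \<le> sum_list (map (\<lambda>j. onorm (a j) * onorm (b j) * norm h) [1..<l+1])"
      unfolding elem_op_eq_sum_list
      by (intro order_trans[OF norm_sum_list_le sum_list_mono])
    then show "norm (elem_op l a b x h) \<le> C * norm h" unfolding C_def by (simp add: sum_list_mult_const)
  qed
  then show ?thesis by (intro bdd_aboveI[of _ C]) auto
qed

lemma contraction_iff_onorm_le_1: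
  "bounded_clinear x \<Longrightarrow> contraction x \<longleftrightarrow> onorm x \<le> 1"
  unfolding contraction_def
  using bounded_clinear_norm_le_onorm onorm_bound[of 1 x]
  by (metis mult_1 mult_right_mono norm_ge_zero order_trans zero_le_one)

lemma onorm_elem_op_le_elem_op_norm:
  assumes "\<forall>j\<in>{1..l}. bounded_clinear (a j) \<and> bounded_clinear (b j)" and "contraction x"
  shows "onorm (elem_op l a b x) \<le> elem_op_norm l a b"
  unfolding elem_op_norm_def using assms contraction_iff_onorm_le_1
  by (intro cSup_upper[OF _ bdd_above_elem_op_norms]) (auto simp: contraction_def)

lemma onorm_le_if_cinner_le:
  fixes A :: "'a::complex_inner \<Rightarrow> 'a"
  assumes A: "bounded_clinear A" and M: "0 \<le> M"
    and le: "\<And>\<xi> \<eta>. norm \<xi> = 1 \<Longrightarrow> norm \<eta> = 1 \<Longrightarrow> cmod (cinner \<xi> (A \<eta>)) \<le> M"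
  shows "onorm A \<le> M"
proof (rule onorm_bound[OF M])
  fix h
  show "norm (A h) \<le> M * norm h"
  proof (cases "h = 0")
    case False
    define \<eta> where "\<eta> = scaleC (complex_of_real (1 / norm h)) h"
    have n\<eta>: "norm \<eta> = 1" unfolding \<eta>_def using False by (rule norm_scaleC_inverse_norm)
    have Ah: "A h = scaleC (complex_of_real (norm h)) (A \<eta>)"
      using False by (simp add: \<eta>_def bounded_clinear_scaleC[OF A] scaleC_scaleC scaleC_one)
    have nA: "norm (A \<eta>) \<le> M"
    proof (cases "A \<eta> = 0")
      case False
      define \<xi> where "\<xi> = scaleC (complex_of_real (1 / norm (A \<eta>))) (A \<eta>)"
      have "norm \<xi> = 1" unfolding \<xi>_def using False by (rule norm_scaleC_inverse_norm)
      moreover have "cinner \<xi> (A \<eta>) = complex_of_real (norm (A \<eta>))"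
        unfolding \<xi>_def by (rule cinner_scaleC_inverse_norm)
      ultimately show ?thesis using le[OF _ n\<eta>] by fastforce
    qed (simp add: M)
    show ?thesis unfolding Ah norm_scaleC
      using mult_right_mono[OF nA norm_ge_zero[of h]] by (simp add: mult.commute)
  qed (simp add: bounded_clinear_zero[OF A])
qed

lemma elem_op_norm_le:
  assumes ab: "\<forall>j\<in>{1..l}. bounded_clinear (a j) \<and> bounded_clinear (b j)" and M: "0 \<le> M"
    and le: "\<And>x \<xi> \<eta>. contraction x \<Longrightarrow> norm \<xi> = 1 \<Longrightarrow> norm \<eta> = 1 \<Longrightarrow>
      cmod (cinner \<xi> (elem_op l a b x \<eta>)) \<le> M"
  shows "elem_op_norm l a b \<le> M"
  unfolding elem_op_norm_def
proof (rule cSup_least)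
  show "{onorm (elem_op l a b x) | x. bounded_clinear x \<and> onorm x \<le> 1} \<noteq> {}"
    using bounded_clinear_zero_fun by (auto simp: onorm_zero)
next
  fix t assume "t \<in> {onorm (elem_op l a b x) | x. bounded_clinear x \<and> onorm x \<le> 1}"
  then obtain x where t: "t = onorm (elem_op l a b x)" and x: "bounded_clinear x" "contraction x"
    using contraction_iff_onorm_le_1 by blast
  show "t \<le> M"
    unfolding t using le[OF x(2)] by (intro onorm_le_if_cinner_le bounded_clinear_elem_op ab x(1) M)
qed

definition haagerup_cost :: "(('a::complex_inner \<Rightarrow> 'a) \<times> ('a \<Rightarrow> 'a)) list \<Rightarrow> real" where
  "haagerup_cost r =
     sqrt (onorm (\<lambda>h. sum_list (map (\<lambda>(c, d). c (cadj c h)) r))) *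
     sqrt (onorm (\<lambda>h. sum_list (map (\<lambda>(c, d). cadj d (d h)) r)))"

definition haagerup_rep :: "(('a::complex_inner \<Rightarrow> 'a) \<times> ('a \<Rightarrow> 'a)) list
    \<Rightarrow> (('a \<Rightarrow> 'a) \<times> ('a \<Rightarrow> 'a)) list \<Rightarrow> bool" where
  "haagerup_rep r u \<longleftrightarrow> (\<forall>(c, d) \<in> set r. bounded_clinear c \<and> bounded_clinear d) \<and> same_tensor r u"

lemma haagerup_norm_eq_Inf: "haagerup_norm u = Inf {haagerup_cost r | r. haagerup_rep r u}"
  unfolding haagerup_norm_def haagerup_cost_def haagerup_rep_def ..

lemma bounded_clinear_sum_comp_cadj:
  fixes r :: "(('a::chilbert_space \<Rightarrow> 'a) \<times> ('a \<Rightarrow> 'a)) list"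
  assumes "\<forall>(c, d) \<in> set r. bounded_clinear c \<and> bounded_clinear d"
  shows "bounded_clinear (\<lambda>h. sum_list (map (\<lambda>(c, d). c (cadj c h)) r))"
    and "bounded_clinear (\<lambda>h. sum_list (map (\<lambda>(c, d). cadj d (d h)) r))"
proof -
  have "bounded_clinear (case q of (c, d) \<Rightarrow> c \<circ> cadj c)" "bounded_clinear (case q of (c, d) \<Rightarrow> cadj d \<circ> d)"
    if "q \<in> set r" for q
  proof -
    obtain c d where q: "q = (c, d)" by fastforce
    then have "bounded_clinear c" "bounded_clinear d" using assms that by auto
    then show "bounded_clinear (case q of (c, d) \<Rightarrow> c \<circ> cadj c)" "bounded_clinear (case q of (c, d) \<Rightarrow> cadj d \<circ> d)"
      unfolding q by (simp_all add: bounded_clinear_compose bounded_clinear_cadj)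
  qed
  from bounded_clinear_sum_list_fun[OF this(1)] bounded_clinear_sum_list_fun[OF this(2)]
  show "bounded_clinear (\<lambda>h. sum_list (map (\<lambda>(c, d). c (cadj c h)) r))"
    and "bounded_clinear (\<lambda>h. sum_list (map (\<lambda>(c, d). cadj d (d h)) r))"
    by (simp_all add: case_prod_unfold)
qed

lemma haagerup_cost_nonneg:
  fixes r :: "(('a::chilbert_space \<Rightarrow> 'a) \<times> ('a \<Rightarrow> 'a)) list"
  assumes "\<forall>(c, d) \<in> set r. bounded_clinear c \<and> bounded_clinear d"
  shows "0 \<le> haagerup_cost r"
  unfolding haagerup_cost_def
  using bounded_clinear_sum_comp_cadj[OF assms, THEN bounded_clinear_imp_bounded_linear, THEN onorm_pos_le]
  by simp

lemma haagerup_norm_le_cost: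
  fixes r u :: "(('a::chilbert_space \<Rightarrow> 'a) \<times> ('a \<Rightarrow> 'a)) list"
  assumes "haagerup_rep r u"
  shows "haagerup_norm u \<le> haagerup_cost r"
  unfolding haagerup_norm_eq_Inf
proof (rule cInf_lower)
  show "bdd_below {haagerup_cost r | r. haagerup_rep r u}"
    using haagerup_cost_nonneg unfolding haagerup_rep_def by (intro bdd_belowI[of _ 0]) blast
qed (use assms in blast)

lemma le_haagerup_normI:
  fixes u :: "(('a::chilbert_space \<Rightarrow> 'a) \<times> ('a \<Rightarrow> 'a)) list"
  assumes "\<forall>(c, d) \<in> set u. bounded_clinear c \<and> bounded_clinear d"
    and "\<And>r. haagerup_rep r u \<Longrightarrow> M \<le> haagerup_cost r"
  shows "M \<le> haagerup_norm u"
  unfolding haagerup_norm_eq_Inf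
proof (rule cInf_greatest)
  have "haagerup_rep u u" using assms(1) unfolding haagerup_rep_def same_tensor_def by blast
  then show "{haagerup_cost r | r. haagerup_rep r u} \<noteq> {}" by blast
qed (use assms(2) in blast)

definition ketbra_pairs :: "'a::complex_inner \<Rightarrow> 'a \<Rightarrow> ('a \<times> 'a) list \<Rightarrow> (('a \<Rightarrow> 'a) \<times> ('a \<Rightarrow> 'a)) list" where
  "ketbra_pairs \<xi> \<eta> L = map (\<lambda>p. (ketbra \<xi> (fst p), ketbra (snd p) \<eta>)) L"

lemma ketbra_pairs_bounded: "\<forall>(c, d) \<in> set (ketbra_pairs \<xi> \<eta> L). bounded_clinear c \<and> bounded_clinear d"
  by (auto simp: ketbra_pairs_def bounded_clinear_ketbra)

lemma same_tensor_ketbra_pairs: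
  assumes "tensor_equiv L L'"
  shows "same_tensor (ketbra_pairs \<xi> \<eta> L') (ketbra_pairs \<xi> \<eta> L)"
  unfolding same_tensor_def
proof (intro allI impI)
  fix \<phi> \<psi> :: "('a \<Rightarrow> 'a) \<Rightarrow> complex"
  assume \<phi>: "clinear_functional \<phi>" and \<psi>: "clinear_functional \<psi>"
  have ket: "ketbra \<xi> (x + y) = (\<lambda>h. ketbra \<xi> x h + ketbra \<xi> y h)"
    "ketbra \<xi> (scaleC c x) = (\<lambda>h. scaleC (cnj c) (ketbra \<xi> x h))"
    "ketbra (x + y) \<eta> = (\<lambda>h. ketbra x \<eta> h + ketbra y \<eta> h)"
    "ketbra (scaleC c x) \<eta> = (\<lambda>h. scaleC c (ketbra x \<eta> h))" for x y c
    by (simp_all add: ketbra_def cinner_add_left scaleC_add_left cinner_scaleC_left scaleC_scaleC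
        scaleC_add_right mult.commute)
  have "antilinear_form (\<lambda>\<gamma>. \<phi> (ketbra \<xi> \<gamma>))" "clinear_form (\<lambda>\<delta>. \<psi> (ketbra \<delta> \<eta>))"
    unfolding antilinear_form_def clinear_form_def ket
    using \<phi> \<psi> bounded_clinear_ketbra unfolding clinear_functional_def by blast+
  then have "tensor_pairing (\<lambda>\<gamma>. \<phi> (ketbra \<xi> \<gamma>)) (\<lambda>\<delta>. \<psi> (ketbra \<delta> \<eta>)) L'
      = tensor_pairing (\<lambda>\<gamma>. \<phi> (ketbra \<xi> \<gamma>)) (\<lambda>\<delta>. \<psi> (ketbra \<delta> \<eta>)) L"
    using assms unfolding tensor_equiv_def by metis
  then show "sum_list (map (\<lambda>(c, d). \<phi> c * \<psi> d) (ketbra_pairs \<xi> \<eta> L')) =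
      sum_list (map (\<lambda>(c, d). \<phi> c * \<psi> d) (ketbra_pairs \<xi> \<eta> L))"
    by (simp add: ketbra_pairs_def tensor_pairing_def o_def)
qed

lemma onorm_scaleC_ketbra_le:
  assumes "norm \<xi> = 1" "0 \<le> C"
  shows "onorm (\<lambda>h. scaleC (complex_of_real C) (ketbra \<xi> \<xi> h)) \<le> C"
proof (rule onorm_bound[OF assms(2)])
  show "norm (scaleC (complex_of_real C) (ketbra \<xi> \<xi> h)) \<le> C * norm h" for h
    using norm_cinner_le[of \<xi> h] assms mult_left_mono[of "cmod (cinner \<xi> h)" "norm h" C]
    by (simp add: ketbra_def norm_scaleC)
qed

lemma haagerup_cost_ketbra_pairs_le:
  fixes \<xi> :: "'a::chilbert_space"
  assumes n\<xi>: "norm \<xi> = 1" and n\<eta>: "norm \<eta> = 1" and bal: "balanced_pairs L"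
  shows "haagerup_cost (ketbra_pairs \<xi> \<eta> L) \<le> sum_sq_norm_fst L"
proof -
  define C where "C = sum_sq_norm_fst L"
  have C0: "0 \<le> C" unfolding C_def sum_sq_norm_fst_def by (rule sum_list_nonneg) auto
  have C': "C = sum_list (map (\<lambda>p. (norm (snd p))\<^sup>2) L)"
    using bal unfolding C_def sum_sq_norm_fst_def balanced_pairs_def by (simp cong: map_cong)
  have e1: "(\<lambda>h. sum_list (map (\<lambda>(c, d). c (cadj c h)) (ketbra_pairs \<xi> \<eta> L)))
      = (\<lambda>h. scaleC (complex_of_real C) (ketbra \<xi> \<xi> h))"
    unfolding C_def sum_sq_norm_fst_def ketbra_pairs_def
    by (simp add: o_def cadj_ketbra)
      (simp add: ketbra_def cinner_scaleC_right cinner_self_eq_norm_power2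
        sum_list_scaleC_left of_real_sum_list sum_list_const_mult scaleC_scaleC mult.commute)
  have e2: "(\<lambda>h. sum_list (map (\<lambda>(c, d). cadj d (d h)) (ketbra_pairs \<xi> \<eta> L)))
      = (\<lambda>h. scaleC (complex_of_real C) (ketbra \<eta> \<eta> h))"
    unfolding C' ketbra_pairs_def
    by (simp add: o_def cadj_ketbra)
      (simp add: ketbra_def cinner_scaleC_right cinner_self_eq_norm_power2
        sum_list_scaleC_left of_real_sum_list sum_list_const_mult scaleC_scaleC mult.commute)
  have "0 \<le> onorm (\<lambda>h. scaleC (complex_of_real C) (ketbra \<xi> \<xi> h))"
    "0 \<le> onorm (\<lambda>h. scaleC (complex_of_real C) (ketbra \<eta> \<eta> h))"
    using bounded_clinear_sum_comp_cadj[OF ketbra_pairs_bounded, of \<xi> \<eta> L] unfolding e1 e2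
    by (simp_all add: onorm_pos_le bounded_clinear_imp_bounded_linear)
  then have "haagerup_cost (ketbra_pairs \<xi> \<eta> L) \<le> sqrt C * sqrt C"
    unfolding haagerup_cost_def e1 e2
    using onorm_scaleC_ketbra_le[OF n\<xi> C0] onorm_scaleC_ketbra_le[OF n\<eta> C0]
    by (intro mult_mono real_sqrt_le_mono) auto
  then show ?thesis using C0 by (simp add: C_def)
qed

lemma trace_pairing_elem_op:
  fixes a b :: "nat \<Rightarrow> 'a::chilbert_space \<Rightarrow> 'a"
  assumes ab: "\<forall>j\<in>{1..l}. bounded_clinear (a j) \<and> bounded_clinear (b j)"
  shows "trace_pairing (map (\<lambda>j. (cadj (a j) \<xi>, b j \<eta>)) [1..<l+1]) x = cinner \<xi> (elem_op l a b x \<eta>)"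
proof -
  have "cinner (cadj (a j) \<xi>) (x (b j \<eta>)) = cinner \<xi> (a j (x (b j \<eta>)))" if "j \<in> set [1..<l+1]" for j
  proof -
    have "bounded_clinear (a j)" using ab that by auto
    then show ?thesis by (rule cinner_cadj_left)
  qed
  then show ?thesis
    unfolding trace_pairing_def elem_op_eq_sum_list cinner_sum_list_right map_map
    by (intro arg_cong[where f = sum_list] map_cong) simp_all
qed

lemma rank_one_compressions_eq_ketbra_pairs:
  fixes a b :: "nat \<Rightarrow> 'a::chilbert_space \<Rightarrow> 'a"
  assumes ab: "\<forall>j\<in>{1..l}. bounded_clinear (a j) \<and> bounded_clinear (b j)"
  shows "map (\<lambda>j. (ketbra \<xi> \<xi> \<circ> a j, b j \<circ> ketbra \<eta> \<eta>)) [1..<l+1]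
    = ketbra_pairs \<xi> \<eta> (map (\<lambda>j. (cadj (a j) \<xi>, b j \<eta>)) [1..<l+1])"
  using ab by (auto simp: ketbra_pairs_def ketbra_comp_left comp_ketbra_right)

theorem haagerup_norm_le_elem_op_norm:
  fixes a b :: "nat \<Rightarrow> 'a::chilbert_space \<Rightarrow> 'a"
  assumes ab: "\<forall>j\<in>{1..l}. bounded_clinear (a j) \<and> bounded_clinear (b j)"
    and n\<xi>: "norm \<xi> = 1" and n\<eta>: "norm \<eta> = 1"
  shows "haagerup_norm (map (\<lambda>j. (ketbra \<xi> \<xi> \<circ> a j, b j \<circ> ketbra \<eta> \<eta>)) [1..<l+1]) \<le> elem_op_norm l a b"
proof -
  define L where "L = map (\<lambda>j. (cadj (a j) \<xi>, b j \<eta>)) [1..<l+1]"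
  obtain E where E: "orthonormal_list E" "\<forall>w\<in>set (map fst L). orth_proj E w = w"
    using gram_schmidt_exists by blast
  obtain E' where E': "orthonormal_list E'" "\<forall>w\<in>set (map snd L). orth_proj E' w = w"
    using gram_schmidt_exists by blast
  obtain L2 x where L2: "tensor_equiv L L2" "balanced_pairs L2" "contraction x"
      "sum_sq_norm_fst L2 \<le> Re (trace_pairing L x)"
    using balanced_decomposition[OF E(1) E'(1)] E(2) E'(2) by fastforce
  have "haagerup_norm (ketbra_pairs \<xi> \<eta> L) \<le> haagerup_cost (ketbra_pairs \<xi> \<eta> L2)"
    using ketbra_pairs_bounded same_tensor_ketbra_pairs[OF L2(1)]
    by (intro haagerup_norm_le_cost) (simp add: haagerup_rep_def)
  also have "\<dots> \<le> sum_sq_norm_fst L2" by (rule haagerup_cost_ketbra_pairs_le[OF n\<xi> n\<eta> L2(2)])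
  also have "\<dots> \<le> Re (cinner \<xi> (elem_op l a b x \<eta>))"
    using L2(4) trace_pairing_elem_op[OF ab] by (simp add: L_def)
  also have "\<dots> \<le> norm (elem_op l a b x \<eta>)" using Re_cinner_le[of \<xi>] n\<xi> by simp
  also have "\<dots> \<le> onorm (elem_op l a b x)"
    using bounded_clinear_norm_le_onorm[OF bounded_clinear_elem_op[OF ab], of x \<eta>] L2(3) n\<eta>
    by (simp add: contraction_def)
  also have "\<dots> \<le> elem_op_norm l a b" by (rule onorm_elem_op_le_elem_op_norm[OF ab L2(3)])
  finally show ?thesis unfolding rank_one_compressions_eq_ketbra_pairs[OF ab] L_def .
qed

lemma sum_list_mult_power2_le:
  fixes A B :: "'b \<Rightarrow> real"
  shows "(sum_list (map (\<lambda>q. A q * B q) r))\<^sup>2 \<le> sum_list (map (\<lambda>q. (A q)\<^sup>2) r) * sum_list (map (\<lambda>q. (B q)\<^sup>2) r)"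
proof -
  have conv: "sum_list (map f r) = (\<Sum>i\<in>{0..<length r}. f (r ! i))" for f :: "'b \<Rightarrow> real"
    by (simp add: sum_list_sum_nth)
  show ?thesis unfolding conv by (rule Cauchy_Schwarz_ineq_sum)
qed

lemma Re_cinner_le_onorm:
  assumes "bounded_clinear F" "norm \<xi> = 1"
  shows "Re (cinner \<xi> (F \<xi>)) \<le> onorm F"
  using Re_cinner_le[of \<xi> "F \<xi>"] bounded_clinear_norm_le_onorm[OF assms(1), of \<xi>] assms(2) by simp

lemma sum_cinner_expand:
  assumes x: "bounded_clinear x" and R: "\<forall>q\<in>set R. bounded_clinear (fst q)"
    and G: "\<forall>q\<in>set R. orth_proj G (snd q \<eta>) = snd q \<eta>"
  shows "sum_list (map (\<lambda>q. cinner \<xi> (fst q (x (snd q \<eta>)))) R)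
       = sum_list (map (\<lambda>g. sum_list (map (\<lambda>q. cinner \<xi> (fst q (x g)) * cinner g (snd q \<eta>)) R)) G)"
proof -
  have "cinner \<xi> (fst q (x (snd q \<eta>))) = sum_list (map (\<lambda>g. cinner \<xi> (fst q (x g)) * cinner g (snd q \<eta>)) G)"
    if q: "q \<in> set R" for q
  proof -
    have fq: "bounded_clinear (fst q)" using R q by auto
    have "cinner \<xi> (fst q (x (snd q \<eta>))) = cinner \<xi> (fst q (x (orth_proj G (snd q \<eta>))))"
      using G q by simp
    also have "\<dots> = sum_list (map (\<lambda>g. cinner \<xi> (fst q (x g)) * cinner g (snd q \<eta>)) G)"
      unfolding orth_proj_def bounded_clinear_sum_list[OF x] bounded_clinear_sum_list[OF fq] cinner_sum_list_right
      by (simp add: bounded_clinear_scaleC[OF x] bounded_clinear_scaleC[OF fq] cinner_scaleC_right mult.commute)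
    finally show ?thesis .
  qed
  then have "sum_list (map (\<lambda>q. cinner \<xi> (fst q (x (snd q \<eta>)))) R)
      = sum_list (map (\<lambda>q. sum_list (map (\<lambda>g. cinner \<xi> (fst q (x g)) * cinner g (snd q \<eta>)) G)) R)"
    by (intro arg_cong[where f = sum_list] map_cong) simp_all
  also have "\<dots> = sum_list (map (\<lambda>g. sum_list (map (\<lambda>q. cinner \<xi> (fst q (x g)) * cinner g (snd q \<eta>)) R)) G)"
    by (rule sum_list_map_swap)
  finally show ?thesis .
qed

text \<open>For fixed \<open>\<xi>, x, \<eta>\<close> the map \<open>c \<otimes> d \<mapsto> \<langle>\<xi>, c x d \<eta>\<rangle>\<close> is well defined on tensors: expanding
  \<open>d \<eta>\<close> in an orthonormal basis of a common finite-dimensional span writes it through products of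
  the linear functionals \<open>c \<mapsto> \<langle>\<xi>, c x g\<rangle>\<close> and \<open>d \<mapsto> \<langle>g, d \<eta>\<rangle>\<close>.\<close>

lemma same_tensor_sum_cinner_eq:
  assumes st: "same_tensor r u" and x: "bounded_clinear x"
    and r: "\<forall>q\<in>set r. bounded_clinear (fst q)" and u: "\<forall>q\<in>set u. bounded_clinear (fst q)"
  shows "sum_list (map (\<lambda>q. cinner \<xi> (fst q (x (snd q \<eta>)))) r)
       = sum_list (map (\<lambda>q. cinner \<xi> (fst q (x (snd q \<eta>)))) u)"
proof -
  obtain G where G: "orthonormal_list G" "\<forall>v\<in>set (map (\<lambda>q. snd q \<eta>) (r @ u)). orth_proj G v = v"
    using gram_schmidt_exists by blast
  have "clinear_functional (\<lambda>c. cinner \<xi> (c (x g)))" "clinear_functional (\<lambda>d. cinner g (d \<eta>))" for g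
    unfolding clinear_functional_def by (simp_all add: cinner_add_right cinner_scaleC_right)
  then have "sum_list (map (\<lambda>q. cinner \<xi> (fst q (x g)) * cinner g (snd q \<eta>)) r)
           = sum_list (map (\<lambda>q. cinner \<xi> (fst q (x g)) * cinner g (snd q \<eta>)) u)" for g
    using st unfolding same_tensor_def case_prod_unfold by blast
  moreover have "\<forall>q\<in>set r. orth_proj G (snd q \<eta>) = snd q \<eta>" "\<forall>q\<in>set u. orth_proj G (snd q \<eta>) = snd q \<eta>"
    using G(2) by auto
  ultimately show ?thesis by (simp add: sum_cinner_expand[OF x r] sum_cinner_expand[OF x u])
qed

lemma sum_power2_norm_cadj_le_onorm:
  fixes r :: "(('a::chilbert_space \<Rightarrow> 'a) \<times> ('a \<Rightarrow> 'a)) list"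
  assumes r: "\<forall>(c, d) \<in> set r. bounded_clinear c \<and> bounded_clinear d" and n\<xi>: "norm \<xi> = 1"
  shows "sum_list (map (\<lambda>q. (norm (cadj (fst q) \<xi>))\<^sup>2) r) \<le> onorm (\<lambda>h. sum_list (map (\<lambda>(c, d). c (cadj c h)) r))"
proof -
  have "complex_of_real (sum_list (map (\<lambda>q. (norm (cadj (fst q) \<xi>))\<^sup>2) r))
      = cinner \<xi> (sum_list (map (\<lambda>(c, d). c (cadj c \<xi>)) r))"
    unfolding cinner_sum_list_right of_real_sum_list case_prod_unfold
  proof (rule arg_cong[where f = sum_list], rule map_cong[OF refl])
    fix q assume "q \<in> set r"
    then have "bounded_clinear (fst q)" using r by auto
    then show "complex_of_real ((norm (cadj (fst q) \<xi>))\<^sup>2) = cinner \<xi> (fst q (cadj (fst q) \<xi>))"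
      using cinner_cadj_left[of "fst q" \<xi> "cadj (fst q) \<xi>"] by (simp add: cinner_self_eq_norm_power2)
  qed
  from arg_cong[where f = Re, OF this] show ?thesis
    using Re_cinner_le_onorm[OF bounded_clinear_sum_comp_cadj(1)[OF r] n\<xi>] by simp
qed

lemma sum_power2_norm_apply_le_onorm:
  fixes r :: "(('a::chilbert_space \<Rightarrow> 'a) \<times> ('a \<Rightarrow> 'a)) list"
  assumes r: "\<forall>(c, d) \<in> set r. bounded_clinear c \<and> bounded_clinear d" and n\<eta>: "norm \<eta> = 1"
  shows "sum_list (map (\<lambda>q. (norm (snd q \<eta>))\<^sup>2) r) \<le> onorm (\<lambda>h. sum_list (map (\<lambda>(c, d). cadj d (d h)) r))"
proof -
  have "complex_of_real (sum_list (map (\<lambda>q. (norm (snd q \<eta>))\<^sup>2) r))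
      = cinner \<eta> (sum_list (map (\<lambda>(c, d). cadj d (d \<eta>)) r))"
    unfolding cinner_sum_list_right of_real_sum_list case_prod_unfold
  proof (rule arg_cong[where f = sum_list], rule map_cong[OF refl])
    fix q assume "q \<in> set r"
    then have "bounded_clinear (snd q)" using r by auto
    then show "complex_of_real ((norm (snd q \<eta>))\<^sup>2) = cinner \<eta> (cadj (snd q) (snd q \<eta>))"
      using cinner_cadj_right[of "snd q" \<eta> "snd q \<eta>"] by (simp add: cinner_self_eq_norm_power2)
  qed
  from arg_cong[where f = Re, OF this] show ?thesis
    using Re_cinner_le_onorm[OF bounded_clinear_sum_comp_cadj(2)[OF r] n\<eta>] by simp
qed

lemma cmod_sum_cinner_le_haagerup_cost:
  fixes r :: "(('a::chilbert_space \<Rightarrow> 'a) \<times> ('a \<Rightarrow> 'a)) list"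
  assumes r: "\<forall>(c, d) \<in> set r. bounded_clinear c \<and> bounded_clinear d"
    and n\<xi>: "norm \<xi> = 1" and n\<eta>: "norm \<eta> = 1" and x: "\<And>v. norm (x v) \<le> norm v"
  shows "cmod (sum_list (map (\<lambda>q. cinner \<xi> (fst q (x (snd q \<eta>)))) r)) \<le> haagerup_cost r"
proof -
  define A B where "A q = norm (cadj (fst q) \<xi>)" and "B q = norm (snd q \<eta>)"
    for q :: "('a \<Rightarrow> 'a) \<times> ('a \<Rightarrow> 'a)"
  have "cmod (sum_list (map (\<lambda>q. cinner \<xi> (fst q (x (snd q \<eta>)))) r))
      \<le> sum_list (map (\<lambda>q. cmod (cinner \<xi> (fst q (x (snd q \<eta>))))) r)"
    by (rule norm_sum_list_le)
  also have "\<dots> \<le> sum_list (map (\<lambda>q. A q * B q) r)"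
  proof (rule sum_list_mono)
    fix q assume q: "q \<in> set r"
    then have "bounded_clinear (fst q)" using r by auto
    then have "cinner \<xi> (fst q (x (snd q \<eta>))) = cinner (cadj (fst q) \<xi>) (x (snd q \<eta>))"
      by (rule cinner_cadj_left[symmetric])
    then have "cmod (cinner \<xi> (fst q (x (snd q \<eta>)))) \<le> A q * norm (x (snd q \<eta>))"
      unfolding A_def by (simp add: norm_cinner_le)
    also have "\<dots> \<le> A q * B q" unfolding B_def using x by (simp add: A_def mult_left_mono)
    finally show "cmod (cinner \<xi> (fst q (x (snd q \<eta>)))) \<le> A q * B q" .
  qed
  also have "\<dots> \<le> sqrt (sum_list (map (\<lambda>q. (A q)\<^sup>2) r)) * sqrt (sum_list (map (\<lambda>q. (B q)\<^sup>2) r))"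
    using real_sqrt_le_mono[OF sum_list_mult_power2_le[of A B r]] by (simp add: real_sqrt_mult)
  also have "\<dots> \<le> haagerup_cost r"
  proof -
    have "0 \<le> onorm (\<lambda>h. sum_list (map (\<lambda>(c, d). c (cadj c h)) r))"
      using bounded_clinear_sum_comp_cadj(1)[OF r]
      by (simp add: onorm_pos_le bounded_clinear_imp_bounded_linear)
    moreover have "0 \<le> sum_list (map (\<lambda>q. (B q)\<^sup>2) r)" by (rule sum_list_nonneg) auto
    ultimately show ?thesis
      unfolding haagerup_cost_def A_def
      using sum_power2_norm_cadj_le_onorm[OF r n\<xi>] sum_power2_norm_apply_le_onorm[OF r n\<eta>]
      by (intro mult_mono real_sqrt_le_mono) (simp_all add: B_def)
  qed
  finally show ?thesis .
qed

lemma sum_cinner_rank_one_compressions: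
  fixes a b :: "nat \<Rightarrow> 'a::complex_inner \<Rightarrow> 'a"
  assumes n\<xi>: "norm \<xi> = 1" and n\<eta>: "norm \<eta> = 1"
  shows "sum_list (map (\<lambda>q. cinner \<xi> (fst q (x (snd q \<eta>))))
      (map (\<lambda>j. (ketbra \<xi> \<xi> \<circ> a j, b j \<circ> ketbra \<eta> \<eta>)) [1..<l+1]))
    = cinner \<xi> (elem_op l a b x \<eta>)"
  using n\<xi> n\<eta>
  by (simp add: elem_op_eq_sum_list cinner_sum_list_right o_def ketbra_def cinner_scaleC_right
      cinner_self_eq_norm_power2 scaleC_one)

theorem cinner_elem_op_le_haagerup_norm:
  fixes a b :: "nat \<Rightarrow> 'a::chilbert_space \<Rightarrow> 'a"
  assumes ab: "\<forall>j\<in>{1..l}. bounded_clinear (a j) \<and> bounded_clinear (b j)"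
    and n\<xi>: "norm \<xi> = 1" and n\<eta>: "norm \<eta> = 1" and x: "contraction x"
  shows "cmod (cinner \<xi> (elem_op l a b x \<eta>))
    \<le> haagerup_norm (map (\<lambda>j. (ketbra \<xi> \<xi> \<circ> a j, b j \<circ> ketbra \<eta> \<eta>)) [1..<l+1])"
    (is "_ \<le> haagerup_norm ?u")
proof (rule le_haagerup_normI)
  show u: "\<forall>(c, d) \<in> set ?u. bounded_clinear c \<and> bounded_clinear d"
    using ab by (auto intro!: bounded_clinear_compose bounded_clinear_ketbra)
  fix r assume "haagerup_rep r ?u"
  then have r: "\<forall>(c, d) \<in> set r. bounded_clinear c \<and> bounded_clinear d" and st: "same_tensor r ?u"
    unfolding haagerup_rep_def by auto
  have "bounded_clinear x" using x by (simp add: contraction_def)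
  moreover have "\<forall>q\<in>set r. bounded_clinear (fst q)" "\<forall>q\<in>set ?u. bounded_clinear (fst q)"
    using r u by auto
  ultimately have "sum_list (map (\<lambda>q. cinner \<xi> (fst q (x (snd q \<eta>)))) r) = cinner \<xi> (elem_op l a b x \<eta>)"
    unfolding sum_cinner_rank_one_compressions[OF n\<xi> n\<eta>, symmetric]
    by (rule same_tensor_sum_cinner_eq[OF st])
  then have "cinner \<xi> (elem_op l a b x \<eta>) = sum_list (map (\<lambda>q. cinner \<xi> (fst q (x (snd q \<eta>)))) r)" ..
  then show "cmod (cinner \<xi> (elem_op l a b x \<eta>)) \<le> haagerup_cost r"
    using cmod_sum_cinner_le_haagerup_cost[OF r n\<xi> n\<eta>] x by (simp add: contraction_def)
qed

lemma exists_unit_vector: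
  fixes x :: "'a::complex_inner"
  assumes "x \<noteq> 0"
  obtains e :: 'a where "norm e = 1"
  using assms norm_scaleC_inverse_norm by blast

theorem lemma1p1:
  fixes a b :: "nat \<Rightarrow> 'a::chilbert_space \<Rightarrow> 'a" and l :: nat
  assumes "\<exists>x::'a. x \<noteq> 0"
    and "\<forall>j\<in>{1..l}. bounded_clinear (a j) \<and> bounded_clinear (b j)"
  shows "elem_op_norm l a b =
    Sup {haagerup_norm (map (\<lambda>j. (p1 \<circ> a j, b j \<circ> p2)) [1..<l+1]) | p1 p2.
           rank_one_projection p1 \<and> rank_one_projection p2}"
proof -
  note ab = assms(2)
  define H where "H \<xi> \<eta> = haagerup_norm (map (\<lambda>j. (ketbra \<xi> \<xi> \<circ> a j, b j \<circ> ketbra \<eta> \<eta>)) [1..<l+1])"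
    for \<xi> \<eta> :: 'a
  define S where "S = {H \<xi> \<eta> | \<xi> \<eta>. norm \<xi> = 1 \<and> norm \<eta> = 1}"
  have S_eq: "{haagerup_norm (map (\<lambda>j. (p1 \<circ> a j, b j \<circ> p2)) [1..<l+1]) | p1 p2.
      rank_one_projection p1 \<and> rank_one_projection p2} = S"
    unfolding S_def H_def rank_one_projection_iff by blast
  obtain e :: 'a where e: "norm e = 1" using exists_unit_vector assms(1) by blast
  have upper: "t \<le> elem_op_norm l a b" if "t \<in> S" for t
    using that haagerup_norm_le_elem_op_norm[OF ab] unfolding S_def H_def by blast
  have H_le: "H \<xi> \<eta> \<le> Sup S" if "norm \<xi> = 1" "norm \<eta> = 1" for \<xi> \<eta>
    by (rule cSup_upper[OF _ bdd_aboveI[OF upper]]) (use that in \<open>auto simp: S_def\<close>)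
  have lower: "cmod (cinner \<xi> (elem_op l a b x \<eta>)) \<le> Sup S"
    if "contraction x" "norm \<xi> = 1" "norm \<eta> = 1" for x \<xi> \<eta>
    using cinner_elem_op_le_haagerup_norm[OF ab that(2,3,1)] H_le[OF that(2,3)] unfolding H_def
    by (rule order_trans)
  have "0 \<le> Sup S" using norm_ge_zero lower[OF contraction_zero e e] by (rule order_trans)
  then have "elem_op_norm l a b \<le> Sup S" using lower by (rule elem_op_norm_le[OF ab])
  moreover have "S \<noteq> {}" using e unfolding S_def by blast
  then have "Sup S \<le> elem_op_norm l a b" using upper by (rule cSup_least)
  ultimately show ?thesis unfolding S_eq by simp
qed

end
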